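(* In the setting described in the context, suppose the current primal-dual iterate $(p, v)$ satisfies: (a) the centrality conditions; (b) $\gamma = \Theta(\Xi^{-1})$; (c) $\mathbf{u} \ll \Xi$; (d) the primal step is computed by a backward stable method, i.e. the computed solution of $K_\gamma x = b$ solves $(K_\gamma + \Delta_s K_\gamma)\widehat{x} = b$ for a symmetric $\Delta_s K_\gamma$ with $\|\Delta_s K_\gamma\| \le \mathbf{u}\varepsilon_n \|K_\gamma\|$, $\varepsilon_n$ a small constant depending on $n$. Then, in exact arithmetic, the Schur complement $S_\gamma := G K_\gamma^{-1} G^\top$ satisfies $$S_\gamma = G Y\, \Sigma_L^{-1}\, Y^\top G^\top + O(\Xi^2).$$
   Context: Problem: minimize $f(x)$ over $x\in\mathbb{R}^n$, $s\in\mathbb{R}^{m_i}$ subject to $g(x)=0$, $h(x)+s=0$, $s\ge0$, $g:\mathbb{R}^n\to\mathbb{R}^{m_e}$, $h:\mathbb{R}^n\to\mathbb{R}^{m_i}$, $f$ smooth; $x$ unconstrained. Lagrangian $L(p,v) = f(x)+y^\top g(x)+z^\top(h(x)+s)-v^\top s$, $p=(x,s,y,z)$. $(p^\star,v^\star)$ is a KKT point with $\nabla^2_{xx}L$ Lipschitz near it, LICQ, strict complementarity and second-order sufficiency. Active set $\mathcal{B} = \{i: h_i(x^\star)=0\}$, $m_a = |\mathcal{B}|$, $\ell = m_e+m_a$. Duality measure $\Xi = s^\top v/m_i$; centrality conditions: $\|\nabla_pL(p,v)\|\le C\Xi$, $(s,v)>0$, $s_iv_i\ge\alpha\Xi$ for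 all $i$ ($C>0$, $\alpha\in(0,1)$ fixed). At the iterate: $W=\nabla^2_{xx}L$, $G=\nabla g(x)$, $H=\nabla h(x)$, active Jacobian $A = \begin{bmatrix} H_{\mathcal{B}} \\ G\end{bmatrix}$, $S = \mathrm{diag}(s)$, $V=\mathrm{diag}(v)$, condensed matrix $K_\gamma = W + H^\top S^{-1}VH + \gamma G^\top G$. Spectral decomposition $K_\gamma = U_L\Sigma_LU_L^\top + U_S\Sigma_SU_S^\top$, where $\Sigma_L\in\mathbb{R}^{\ell\times\ell}$ is the diagonal matrix of the $\ell$ largest-magnitude eigenvalues, $\Sigma_S$ the diagonal matrix of the remaining $n-\ell$ eigenvalues, and $U_L, U_S$ have orthonormal columns with $U_L^\top U_S = 0$; $Y$ and $Z$ are matrices with orthonormal columns spanning respectively the row space and the null space of $A$, chosen so that $U_L - Y = O(\underline{\sigma}^{-1})$ and $U_S - Z = O(\underline{\sigma}^{-1})$, where $\underline{\sigma} = \min(1/\Xi,\gamma)$. $\mathbf{u}$ is the unit roundoff; $\ll$ means "much smaller than". $O(\cdot)$, $\Theta(\cdot)$: norm bounded above (resp. above and below) by constants independent of the iterate times the argument. *)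

theory Defs
  imports "HOL-Analysis.Analysis"
begin

definition diagm :: "real^'n \<Rightarrow> real^'n^'n" where
  "diagm d = (\<chi> i j. if i = j then d$i else 0)"

definition colmask :: "'n set \<Rightarrow> real^'n^'m \<Rightarrow> real^'n^'m" where
  "colmask L M = (\<chi> i j. if j \<in> L then M$i$j else 0)"

definition indvec :: "'n set \<Rightarrow> real^'n" where
  "indvec L = (\<chi> j. if j \<in> L then 1 else 0)"

definition hessL ::
  "(real^'n::finite \<Rightarrow> real^'n^'n) \<Rightarrow> ('e::finite \<Rightarrow> real^'n \<Rightarrow> real^'n^'n)
   \<Rightarrow> ('i::finite \<Rightarrow> real^'n \<Rightarrow> real^'n^'n) \<Rightarrow> real^'n \<Rightarrow> real^'e \<Rightarrow> real^'i \<Rightarrow> real^'n^'n"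
  where "hessL fH gH hH x y z =
     fH x + (\<Sum>i\<in>UNIV. y$i *\<^sub>R gH i x) + (\<Sum>i\<in>UNIV. z$i *\<^sub>R hH i x)"

text \<open>Gradient of L(p,v) with respect to p = (x,s,y,z).
  Jacobians: row k of Jg x is the gradient of g_k at x.\<close>
definition gradpL ::
  "(real^'n \<Rightarrow> real^'n) \<Rightarrow> (real^'n \<Rightarrow> real^'n^'e) \<Rightarrow> (real^'n \<Rightarrow> real^'n^'i)
   \<Rightarrow> (real^'n \<Rightarrow> real^'e) \<Rightarrow> (real^'n \<Rightarrow> real^'i)
   \<Rightarrow> real^'n \<Rightarrow> real^'i \<Rightarrow> real^'e \<Rightarrow> real^'i \<Rightarrow> real^'i
   \<Rightarrow> (real^'n) \<times> (real^'i) \<times> (real^'e) \<times> (real^'i)"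
  where "gradpL fg Jg Jh g h x s y z v =
     (fg x + transpose (Jg x) *v y + transpose (Jh x) *v z, z - v, g x, h x + s)"

definition duality :: "real^'i::finite \<Rightarrow> real^'i \<Rightarrow> real" where
  "duality s v = (s \<bullet> v) / real CARD('i)"

definition condensed ::
  "real^'n^'n \<Rightarrow> real^'n^'e \<Rightarrow> real^'n^'i \<Rightarrow> real^'i \<Rightarrow> real^'i \<Rightarrow> real \<Rightarrow> real^'n^'n"
  where "condensed W G H s v \<gamma> =
     W + transpose H ** diagm (\<chi> i. v$i / s$i) ** H + \<gamma> *\<^sub>R (transpose G ** G)"

definition rowspaceA :: "'i set \<Rightarrow> real^'n^'i \<Rightarrow> real^'n^'e \<Rightarrow> (real^'n) set" where
  "rowspaceA B H G = span ({H$i | i. i \<in> B} \<union> {G$j | j. True})"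

definition nullspaceA :: "'i set \<Rightarrow> real^'n^'i \<Rightarrow> real^'n^'e \<Rightarrow> (real^'n) set" where
  "nullspaceA B H G = {d. (\<forall>i\<in>B. H$i \<bullet> d = 0) \<and> G *v d = 0}"

end

theory Submission
  imports Defs
begin

text \<open>
  Near a KKT point satisfying LICQ and second-order sufficiency the condensed matrix
  \<open>K = W + H\<^sup>T S\<^sup>-\<^sup>1 V H + \<gamma> G\<^sup>T G\<close> has a separated spectrum. On the rows of the active
  Jacobian \<open>A\<close> the barrier and penalty terms are of size \<open>1/\<Xi>\<close> (\<open>v\<^sub>i/s\<^sub>i \<ge> const/\<Xi>\<close> for active
  \<open>i\<close>, and \<open>\<gamma> \<ge> c1/\<Xi>\<close>). The columns of \<open>U\<^sub>S\<close> are \<open>O(\<Xi>)\<close>-close to an orthonormal basis \<open>Z\<close>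
  of the null space of \<open>A\<close>, on which \<open>W\<close> is uniformly positive definite, so their eigenvalues
  stay above \<open>\<mu>/2\<close>. The columns of \<open>U\<^sub>L\<close> are orthogonal to them, hence far from that null space,
  and a uniform LICQ constant makes \<open>A\<close> see them: their eigenvalues are at least \<open>const/\<Xi>\<close>.
  In \<open>K\<^sup>-\<^sup>1 = U\<^sub>L \<Sigma>\<^sub>L\<^sup>-\<^sup>1 U\<^sub>L\<^sup>T + U\<^sub>S \<Sigma>\<^sub>S\<^sup>-\<^sup>1 U\<^sub>S\<^sup>T\<close>, replacing \<open>U\<^sub>L\<close> by \<open>Y\<close> costs
  \<open>O(\<Xi>) \<cdot> O(\<Xi>)\<close>, and \<open>G U\<^sub>S = G (U\<^sub>S - Z) = O(\<Xi>)\<close> because \<open>G Z = 0\<close>, so the second term is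
  \<open>O(\<Xi>\<^sup>2)\<close> as well.
\<close>

section \<open>The entrywise 1-norm of matrices\<close>

text \<open>It is submultiplicative and dominates the Frobenius norm \<open>norm\<close> of \<open>real^'n^'m\<close>;
  all matrix estimates below are carried out in it.\<close>

definition entrywise_l1 :: "real^'a^'b \<Rightarrow> real" where
  "entrywise_l1 M = (\<Sum>i\<in>UNIV. \<Sum>j\<in>UNIV. \<bar>M$i$j\<bar>)"

lemma entrywise_l1_nonneg: "0 \<le> entrywise_l1 M"
  unfolding entrywise_l1_def by (intro sum_nonneg) auto

lemma entrywise_l1_add: "entrywise_l1 (A + B) \<le> entrywise_l1 A + entrywise_l1 B"
  unfolding entrywise_l1_def by (simp add: sum.distrib[symmetric] sum_mono abs_triangle_ineq)

lemma entrywise_l1_diff: "entrywise_l1 (A - B) \<le> entrywise_l1 A + entrywise_l1 B"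
  unfolding entrywise_l1_def by (simp add: sum.distrib[symmetric] sum_mono abs_triangle_ineq4)

lemma entrywise_l1_transpose: "entrywise_l1 (transpose A) = entrywise_l1 A"
  unfolding entrywise_l1_def transpose_def by simp (rule sum.swap)

lemma entrywise_l1_mult: "entrywise_l1 (A ** B) \<le> entrywise_l1 A * entrywise_l1 B"
proof -
  have row: "(\<Sum>k\<in>UNIV. \<bar>B$j$k\<bar>) \<le> entrywise_l1 B" for j
    unfolding entrywise_l1_def by (rule member_le_sum) (auto intro: sum_nonneg)
  have "entrywise_l1 (A ** B) \<le> (\<Sum>i\<in>UNIV. \<Sum>k\<in>UNIV. \<Sum>j\<in>UNIV. \<bar>A$i$j\<bar> * \<bar>B$j$k\<bar>)"
    unfolding entrywise_l1_def matrix_matrix_mult_def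
    by (intro sum_mono) (metis (no_types, lifting) abs_mult sum.cong sum_abs vec_lambda_beta)
  also have "\<dots> = (\<Sum>i\<in>UNIV. \<Sum>j\<in>UNIV. \<bar>A$i$j\<bar> * (\<Sum>k\<in>UNIV. \<bar>B$j$k\<bar>))"
    by (simp add: sum_distrib_left) (intro sum.cong refl sum.swap)
  also have "\<dots> \<le> (\<Sum>i\<in>UNIV. \<Sum>j\<in>UNIV. \<bar>A$i$j\<bar> * entrywise_l1 B)"
    by (intro sum_mono mult_left_mono row) auto
  also have "\<dots> = entrywise_l1 A * entrywise_l1 B"
    by (simp add: entrywise_l1_def sum_distrib_right)
  finally show ?thesis .
qed

lemma entrywise_l1_mult3:
  "entrywise_l1 (A ** B ** C) \<le> entrywise_l1 A * entrywise_l1 B * entrywise_l1 C"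
  by (meson entrywise_l1_mult entrywise_l1_nonneg mult_right_mono order_trans)

lemma entrywise_l1_mult3_le:
  assumes "entrywise_l1 A \<le> a" "entrywise_l1 B \<le> b" "entrywise_l1 C \<le> c"
  shows "entrywise_l1 (A ** B ** C) \<le> a * b * c"
proof -
  have "entrywise_l1 A * entrywise_l1 B * entrywise_l1 C \<le> a * b * c"
    using assms entrywise_l1_nonneg[of A] entrywise_l1_nonneg[of B] entrywise_l1_nonneg[of C]
    by (intro mult_mono) (auto intro: order_trans)
  then show ?thesis
    using entrywise_l1_mult3[of A B C] by linarith
qed

lemma norm_le_entrywise_l1: "norm M \<le> entrywise_l1 M"
proof -
  have "norm M \<le> (\<Sum>i\<in>UNIV. norm (M$i))"
    unfolding norm_vec_def by (rule L2_set_le_sum) auto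
  also have "\<dots> \<le> entrywise_l1 M"
    unfolding entrywise_l1_def by (intro sum_mono norm_le_l1_cart)
  finally show ?thesis .
qed

lemma entrywise_l1_le_rows:
  "entrywise_l1 (M::real^'a^'b) \<le> real CARD('a) * (\<Sum>i\<in>UNIV. norm (M$i))"
proof -
  have "entrywise_l1 M \<le> (\<Sum>i\<in>UNIV. \<Sum>j\<in>(UNIV::'a set). norm (M$i))"
    unfolding entrywise_l1_def by (intro sum_mono component_le_norm_cart)
  then show ?thesis by (simp add: sum_distrib_left)
qed

lemma entrywise_l1_le_norm:
  "entrywise_l1 (M::real^'a^'b) \<le> real CARD('a) * real CARD('b) * norm M"
proof -
  have "(\<Sum>i\<in>UNIV. norm (M$i)) \<le> (\<Sum>i\<in>(UNIV::'b set). norm M)"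
    by (intro sum_mono Finite_Cartesian_Product.norm_nth_le)
  then have "real CARD('a) * (\<Sum>i\<in>UNIV. norm (M$i)) \<le> real CARD('a) * real CARD('b) * norm M"
    by (simp add: mult.assoc mult_left_mono)
  then show ?thesis
    using entrywise_l1_le_rows[of M] by linarith
qed

lemma inner_matrix_vector_le: "\<bar>u \<bullet> (M *v w)\<bar> \<le> entrywise_l1 M * norm u * norm w"
proof -
  have entry: "\<bar>u$i * M$i$j * w$j\<bar> \<le> \<bar>M$i$j\<bar> * (norm u * norm w)" for i j
  proof -
    have "\<bar>u$i\<bar> * \<bar>w$j\<bar> \<le> norm u * norm w"
      by (intro mult_mono component_le_norm_cart) auto
    then have "\<bar>M$i$j\<bar> * (\<bar>u$i\<bar> * \<bar>w$j\<bar>) \<le> \<bar>M$i$j\<bar> * (norm u * norm w)"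
      by (simp add: mult_left_mono)
    then show ?thesis by (simp add: abs_mult mult_ac)
  qed
  have "u \<bullet> (M *v w) = (\<Sum>i\<in>UNIV. \<Sum>j\<in>UNIV. u$i * M$i$j * w$j)"
    unfolding inner_vec_def matrix_vector_mult_def by (simp add: sum_distrib_left mult.assoc)
  also have "\<bar>\<dots>\<bar> \<le> (\<Sum>i\<in>UNIV. \<Sum>j\<in>UNIV. \<bar>M$i$j\<bar> * (norm u * norm w))"
    by (rule order_trans[OF sum_abs], rule sum_mono, rule order_trans[OF sum_abs], rule sum_mono)
       (rule entry)
  also have "\<dots> = entrywise_l1 M * norm u * norm w"
    by (simp add: entrywise_l1_def sum_distrib_right mult.assoc)
  finally show ?thesis .
qed

lemma norm_column_le_entrywise_l1: "norm (column j M) \<le> entrywise_l1 M"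
proof -
  have "norm (column j M) \<le> (\<Sum>i\<in>UNIV. \<bar>M$i$j\<bar>)"
    using norm_le_l1_cart[of "column j M"] by (simp add: column_def)
  also have "\<dots> \<le> entrywise_l1 M"
    unfolding entrywise_l1_def by (intro sum_mono member_le_sum) auto
  finally show ?thesis .
qed

section \<open>Spectral decompositions\<close>

lemma diagm_mult_vector: "diagm d *v x = (\<chi> i. d$i * x$i)"
  by (simp add: vec_eq_iff matrix_vector_mult_def diagm_def mult_delta_left)

lemma diagm_mult_diagm: "diagm d ** diagm e = diagm (\<chi> j. d$j * e$j)"
  by (simp add: vec_eq_iff matrix_matrix_mult_def diagm_def mult_delta_left)

lemma orthogonal_matrix_column_inner:
  assumes "orthogonal_matrix (Q::real^'n^'n)"
  shows "column j Q \<bullet> column k Q = (if j = k then 1 else 0)"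
  using assms unfolding orthogonal_matrix matrix_mult_transpose_dot_column
  by (simp add: vec_eq_iff mat_def)

lemma norm_column_orthogonal_matrix:
  "orthogonal_matrix (Q::real^'n^'n) \<Longrightarrow> norm (column j Q) = 1"
  using orthogonal_matrix_column_inner[of Q j j] by (simp add: norm_eq_1)

lemma spectral_column_eigenvector:
  assumes "orthogonal_matrix (Q::real^'n^'n)"
  shows "(Q ** diagm d ** transpose Q) *v column k Q = d$k *\<^sub>R column k Q"
proof -
  have "transpose Q *v column k Q = axis k 1"
    using orthogonal_matrix_column_inner[OF assms]
    by (simp add: vec_eq_iff matrix_vector_mult_def transpose_def column_def inner_vec_def axis_def mult.commute)
  moreover have "diagm d *v axis k 1 = d$k *\<^sub>R axis k 1"
    by (simp add: diagm_mult_vector vec_eq_iff axis_def)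
  moreover have "Q *v axis k 1 = column k Q"
    by (simp add: vec_eq_iff matrix_vector_mult_def axis_def column_def if_distrib cong: if_cong)
  ultimately have "Q *v (diagm d *v (transpose Q *v column k Q)) = d$k *\<^sub>R column k Q"
    by (simp add: matrix_vector_mult_scaleR)
  then show ?thesis by (metis matrix_vector_mul_assoc)
qed

lemma spectral_eigenvalue_quadratic:
  assumes "orthogonal_matrix (Q::real^'n^'n)"
  shows "column k Q \<bullet> ((Q ** diagm d ** transpose Q) *v column k Q) = d$k"
  using spectral_column_eigenvector[OF assms] orthogonal_matrix_column_inner[OF assms, of k k] by simp

lemma matrix_inv_spectral:
  fixes Q :: "real^'n^'n"
  assumes Q: "orthogonal_matrix Q" and d: "\<forall>j. d$j \<noteq> 0"
  defines "K \<equiv> Q ** diagm d ** transpose Q"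
  defines "K' \<equiv> Q ** diagm (\<chi> j. 1 / d$j) ** transpose Q"
  shows "invertible K" and "matrix_inv K = K'"
proof -
  have QQ: "transpose Q ** Q = mat 1" "Q ** transpose Q = mat 1"
    using Q unfolding orthogonal_matrix_def by auto
  have DD: "diagm d ** diagm (\<chi> j. 1 / d$j) = mat 1" "diagm (\<chi> j. 1 / d$j) ** diagm d = mat 1"
    using d by (simp_all only: diagm_mult_diagm) (simp_all add: diagm_def mat_def vec_eq_iff)
  have "K ** K' = Q ** diagm d ** (transpose Q ** Q) ** diagm (\<chi> j. 1 / d$j) ** transpose Q"
    unfolding K_def K'_def by (simp add: matrix_mul_assoc)
  also have "\<dots> = mat 1"
    by (simp add: QQ DD matrix_mul_assoc[symmetric])
  finally have KK': "K ** K' = mat 1" .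
  have "K' ** K = Q ** diagm (\<chi> j. 1 / d$j) ** (transpose Q ** Q) ** diagm d ** transpose Q"
    unfolding K_def K'_def by (simp add: matrix_mul_assoc)
  also have "\<dots> = mat 1"
    by (simp add: QQ DD matrix_mul_assoc[symmetric])
  finally have K'K: "K' ** K = mat 1" .
  show "invertible K"
    unfolding invertible_def using KK' K'K by blast
  have "K ** matrix_inv K = mat 1 \<and> matrix_inv K ** K = mat 1"
    unfolding matrix_inv_def by (rule someI[of _ K']) (use KK' K'K in blast)
  then have "matrix_inv K = matrix_inv K ** (K ** K')"
    using KK' by simp
  also have "\<dots> = K'"
    using \<open>K ** matrix_inv K = mat 1 \<and> matrix_inv K ** K = mat 1\<close> by (simp add: matrix_mul_assoc)
  finally show "matrix_inv K = K'" .
qed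

lemma matrix_mul_diff_left: "(A::real^'n^'m) ** (B - C) = A ** B - A ** C"
  by (simp add: matrix_matrix_mult_def vec_eq_iff sum_subtractf right_diff_distrib)

lemma matrix_mul_diff_right: "((B::real^'n^'m) - C) ** A = B ** A - C ** A"
  by (simp add: matrix_matrix_mult_def vec_eq_iff sum_subtractf left_diff_distrib)

lemma matrix_mul_add_right: "((B::real^'n^'m) + C) ** A = B ** A + C ** A"
  by (simp add: matrix_matrix_mult_def vec_eq_iff sum.distrib distrib_right)

lemma transpose_diff: "transpose ((A::real^'n^'m) - B) = transpose A - transpose B"
  by (simp add: transpose_def vec_eq_iff)

lemma spectral_colmask_split:
  "Q ** diagm (\<chi> j. e j) ** transpose Q =
     colmask L Q ** diagm (\<chi> j. if j \<in> L then e j else 0) ** transpose (colmask L Q)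
   + colmask (-L) Q ** diagm (\<chi> j. if j \<in> -L then e j else 0) ** transpose (colmask (-L) Q)"
proof -
  have entry: "(A ** diagm f ** transpose C) $ i $ k = (\<Sum>j\<in>UNIV. A$i$j * f$j * C$k$j)"
    for A C :: "real^'n^'m" and f i k
    by (simp add: matrix_matrix_mult_def diagm_def transpose_def mult_delta_left
        if_distrib[of "\<lambda>x. A$_$_ * x"] cong: if_cong)
  show ?thesis
    by (simp add: vec_eq_iff entry colmask_def sum.distrib[symmetric] if_distrib cong: if_cong)
      (intro allI sum.cong, auto)
qed

lemma entrywise_l1_colmask_orthogonal:
  assumes "orthogonal_matrix (Q::real^'n^'n)"
  shows "entrywise_l1 (colmask L Q) \<le> real CARD('n) ^ 2"
proof -
  have "\<bar>colmask L Q $ i $ j\<bar> \<le> 1" for i j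
    using component_le_norm_cart[of "column j Q" i] norm_column_orthogonal_matrix[OF assms, of j]
    by (simp add: colmask_def column_def)
  then have "entrywise_l1 (colmask L Q) \<le> (\<Sum>i\<in>(UNIV::'n set). \<Sum>j\<in>(UNIV::'n set). 1)"
    unfolding entrywise_l1_def by (intro sum_mono)
  then show ?thesis
    by (simp add: power2_eq_square)
qed

lemma entrywise_l1_diagm_inverse:
  assumes "\<forall>j\<in>L. t \<le> d$j" and "t > 0"
  shows "entrywise_l1 (diagm (\<chi> j. if j \<in> L then 1 / d$j else 0) :: real^'n^'n) \<le> real CARD('n) / t"
proof -
  have "entrywise_l1 (diagm (\<chi> j. if j \<in> L then 1 / d$j else 0) :: real^'n^'n)
      = (\<Sum>i\<in>(UNIV::'n set). \<bar>if i \<in> L then 1 / d$i else 0\<bar>)"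
    unfolding entrywise_l1_def diagm_def by (simp add: if_distrib[of abs] cong: if_cong)
  also have "\<dots> \<le> (\<Sum>i\<in>(UNIV::'n set). 1 / t)"
    using assms by (intro sum_mono) (auto simp: frac_le)
  finally show ?thesis
    by simp
qed

lemma column_diff_le_entrywise_l1_colmask:
  "j \<notin> L \<Longrightarrow> norm (column j Q - column j Z) \<le> entrywise_l1 (colmask (-L) Q - Z)"
proof -
  assume "j \<notin> L"
  then have "column j (colmask (-L) Q - Z) = column j Q - column j Z"
    by (simp add: column_def colmask_def vec_eq_iff)
  then show ?thesis
    using norm_column_le_entrywise_l1[of j "colmask (-L) Q - Z"] by simp
qed

lemma column_inner_of_gram:
  assumes "transpose Z ** Z = diagm (indvec M)" "j \<in> M" "k \<in> M"
  shows "column j Z \<bullet> column k Z = (if j = k then 1 else 0)"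
  using arg_cong[where f="\<lambda>A. A$j$k", OF assms(1)] assms(2,3)
  by (simp add: matrix_mult_transpose_dot_column diagm_def indvec_def)

lemma span_orthonormal_expansion:
  fixes f :: "'j \<Rightarrow> 'a::real_inner"
  assumes "finite M" and orth: "\<And>j k. j \<in> M \<Longrightarrow> k \<in> M \<Longrightarrow> f j \<bullet> f k = (if j = k then 1 else 0)"
    and "x \<in> span (f ` M)"
  shows "x = (\<Sum>j\<in>M. (f j \<bullet> x) *\<^sub>R f j)"
  using \<open>x \<in> span (f ` M)\<close>
proof (induction rule: span_induct)
  case base
  show ?case
    unfolding subspace_def
    by (simp add: inner_add_right scaleR_add_left sum.distrib)
      (metis (no_types, lifting) scaleR_scaleR scaleR_sum_right sum.cong)
next
  case (step x)
  then obtain k where "k \<in> M" "x = f k"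
    by blast
  then have "(\<Sum>j\<in>M. (f j \<bullet> x) *\<^sub>R f j) = (\<Sum>j\<in>M. if j = k then f j else 0)"
    using orth by (intro sum.cong) auto
  then show ?case
    using \<open>k \<in> M\<close> \<open>x = f k\<close> \<open>finite M\<close> by simp
qed

section \<open>The active constraint gradients\<close>

text \<open>For the active Jacobian \<open>A = [H\<^sub>B; G]\<close>: \<open>active_comb\<close> is \<open>A\<^sup>T (a, b)\<close>,
  \<open>active_abs_sum\<close> and \<open>active_sq_sum\<close> are \<open>\<parallel>A u\<parallel>\<^sub>1\<close> and \<open>\<parallel>A u\<parallel>\<^sub>2\<^sup>2\<close>.\<close>

definition active_comb ::
  "'i set \<Rightarrow> real^'n^'i \<Rightarrow> real^'n^'e \<Rightarrow> ('i \<Rightarrow> real) \<Rightarrow> ('e \<Rightarrow> real) \<Rightarrow> real^'n"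
  where "active_comb B H G a b = (\<Sum>i\<in>B. a i *\<^sub>R H$i) + (\<Sum>j\<in>UNIV. b j *\<^sub>R G$j)"

definition coeff_l1 :: "'i set \<Rightarrow> ('i \<Rightarrow> real) \<Rightarrow> ('e::finite \<Rightarrow> real) \<Rightarrow> real"
  where "coeff_l1 B a b = (\<Sum>i\<in>B. \<bar>a i\<bar>) + (\<Sum>j\<in>UNIV. \<bar>b j\<bar>)"

definition active_abs_sum :: "'i set \<Rightarrow> real^'n^'i \<Rightarrow> real^'n^'e \<Rightarrow> real^'n \<Rightarrow> real"
  where "active_abs_sum B H G u = (\<Sum>i\<in>B. \<bar>H$i \<bullet> u\<bar>) + (\<Sum>j\<in>UNIV. \<bar>G$j \<bullet> u\<bar>)"

definition active_sq_sum :: "'i set \<Rightarrow> real^'n^'i \<Rightarrow> real^'n^'e \<Rightarrow> real^'n \<Rightarrow> real"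
  where "active_sq_sum B H G u = (\<Sum>i\<in>B. (H$i \<bullet> u)\<^sup>2) + (\<Sum>j\<in>UNIV. (G$j \<bullet> u)\<^sup>2)"

definition active_rows_norm :: "'i set \<Rightarrow> real^'n^'i \<Rightarrow> real^'n^'e \<Rightarrow> real"
  where "active_rows_norm B H G = (\<Sum>i\<in>B. norm (H$i)) + (\<Sum>j\<in>UNIV. norm (G$j))"

lemma coeff_l1_nonneg: "0 \<le> coeff_l1 B a b"
  unfolding coeff_l1_def by (intro add_nonneg_nonneg sum_nonneg) auto

lemma active_abs_sum_nonneg: "0 \<le> active_abs_sum B H G u"
  unfolding active_abs_sum_def by (intro add_nonneg_nonneg sum_nonneg) auto

lemma active_sq_sum_nonneg: "0 \<le> active_sq_sum B H G u"
  unfolding active_sq_sum_def by (intro add_nonneg_nonneg sum_nonneg) auto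

lemma active_rows_norm_nonneg: "0 \<le> active_rows_norm B H G"
  unfolding active_rows_norm_def by (intro add_nonneg_nonneg sum_nonneg) auto

lemma sum_mult_le_sum_abs_mult_sum_abs:
  fixes a t :: "'a \<Rightarrow> real"
  assumes "finite I"
  shows "\<bar>\<Sum>i\<in>I. a i * t i\<bar> \<le> (\<Sum>i\<in>I. \<bar>a i\<bar>) * (\<Sum>i\<in>I. \<bar>t i\<bar>)"
proof -
  have "\<bar>\<Sum>i\<in>I. a i * t i\<bar> \<le> (\<Sum>i\<in>I. \<bar>a i\<bar> * \<bar>t i\<bar>)"
    by (rule order_trans[OF sum_abs]) (simp add: abs_mult)
  also have "\<dots> \<le> (\<Sum>i\<in>I. \<bar>a i\<bar> * (\<Sum>i\<in>I. \<bar>t i\<bar>))"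
    by (intro sum_mono mult_left_mono member_le_sum assms) auto
  finally show ?thesis
    by (simp add: sum_distrib_right)
qed

lemma active_comb_inner_le:
  fixes B :: "'i::finite set"
  shows "\<bar>active_comb B H G a b \<bullet> u\<bar> \<le> coeff_l1 B a b * active_abs_sum B H G u"
proof -
  have "\<bar>active_comb B H G a b \<bullet> u\<bar>
      \<le> \<bar>\<Sum>i\<in>B. a i * (H$i \<bullet> u)\<bar> + \<bar>\<Sum>j\<in>UNIV. b j * (G$j \<bullet> u)\<bar>"
    unfolding active_comb_def by (simp add: inner_add_left inner_sum_left abs_triangle_ineq)
  also have "\<dots> \<le> (\<Sum>i\<in>B. \<bar>a i\<bar>) * (\<Sum>i\<in>B. \<bar>H$i \<bullet> u\<bar>)
      + (\<Sum>j\<in>UNIV. \<bar>b j\<bar>) * (\<Sum>j\<in>UNIV. \<bar>G$j \<bullet> u\<bar>)"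
    by (intro add_mono sum_mult_le_sum_abs_mult_sum_abs) simp_all
  also have "\<dots> \<le> coeff_l1 B a b * active_abs_sum B H G u"
    unfolding coeff_l1_def active_abs_sum_def
    by (simp add: algebra_simps add_mono mult_left_mono sum_nonneg)
  finally show ?thesis .
qed

lemma norm_active_comb_le:
  fixes B :: "'i::finite set"
  shows "norm (active_comb B H G a b) \<le> coeff_l1 B a b * active_rows_norm B H G"
proof -
  have "norm (active_comb B H G a b)
      \<le> (\<Sum>i\<in>B. \<bar>a i\<bar> * norm (H$i)) + (\<Sum>j\<in>UNIV. \<bar>b j\<bar> * norm (G$j))"
    unfolding active_comb_def
    by (rule order_trans[OF norm_triangle_ineq], intro add_mono; rule order_trans[OF norm_sum]; simp)
  also have "\<dots> \<le> (\<Sum>i\<in>B. \<bar>a i\<bar>) * (\<Sum>i\<in>B. norm (H$i))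
      + (\<Sum>j\<in>UNIV. \<bar>b j\<bar>) * (\<Sum>j\<in>UNIV. norm (G$j))"
    by (intro add_mono; simp add: sum_distrib_right; intro sum_mono mult_left_mono member_le_sum) auto
  also have "\<dots> \<le> coeff_l1 B a b * active_rows_norm B H G"
    unfolding coeff_l1_def active_rows_norm_def
    by (simp add: algebra_simps add_mono mult_left_mono sum_nonneg)
  finally show ?thesis .
qed

lemma active_comb_diff:
  "active_comb B H' G' a b = active_comb B H G a b + active_comb B (H' - H) (G' - G) a b"
  unfolding active_comb_def by (simp add: algebra_simps sum.distrib[symmetric])

lemma nullspaceA_iff:
  "\<nu> \<in> nullspaceA B H G \<longleftrightarrow> (\<forall>i\<in>B. H$i \<bullet> \<nu> = 0) \<and> (\<forall>j. G$j \<bullet> \<nu> = 0)"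
  unfolding nullspaceA_def
  by (auto simp: vec_eq_iff matrix_vector_mult_def inner_vec_def mult.commute)

lemma subspace_nullspaceA: "subspace (nullspaceA B H G)"
  by (auto simp: subspace_def nullspaceA_iff inner_add_right)

lemma active_abs_sum_add_null:
  "\<nu> \<in> nullspaceA B H G \<Longrightarrow> active_abs_sum B H G (\<rho> + \<nu>) = active_abs_sum B H G \<rho>"
  unfolding nullspaceA_iff active_abs_sum_def by (simp add: inner_add_right)

lemma active_abs_sum_le:
  fixes B :: "'i::finite set"
  shows "active_abs_sum B H G u \<le> active_rows_norm B H G * norm u"
  unfolding active_abs_sum_def active_rows_norm_def distrib_right sum_distrib_right
  by (intro add_mono sum_mono Cauchy_Schwarz_ineq2)

lemma active_abs_sum_perturb:
  fixes B :: "'i::finite set" and u :: "real^'n"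
  shows "active_abs_sum B H G u
    \<le> active_abs_sum B H' G' u + active_rows_norm B (H' - H) (G' - G) * norm u"
proof -
  have row: "\<bar>X \<bullet> u\<bar> \<le> \<bar>X' \<bullet> u\<bar> + norm (X' - X) * norm u" for X X' :: "real^'n"
    using Cauchy_Schwarz_ineq2[of "X' - X" u] by (simp add: inner_diff_left)
  have "(\<Sum>i\<in>B. \<bar>H$i \<bullet> u\<bar>) \<le> (\<Sum>i\<in>B. \<bar>H'$i \<bullet> u\<bar> + norm (H'$i - H$i) * norm u)"
    and "(\<Sum>j\<in>UNIV. \<bar>G$j \<bullet> u\<bar>) \<le> (\<Sum>j\<in>UNIV. \<bar>G'$j \<bullet> u\<bar> + norm (G'$j - G$j) * norm u)"
    by (intro sum_mono row)+
  then show ?thesis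
    unfolding active_abs_sum_def active_rows_norm_def distrib_right sum_distrib_right sum.distrib
    by simp
qed

lemma active_abs_sum_le_sq_sum:
  fixes B :: "'i::finite set" and G :: "real^'n^'e::finite"
  shows "active_abs_sum B H G q \<le> (real (card B) + real CARD('e)) * sqrt (active_sq_sum B H G q)"
proof -
  have "\<bar>x\<bar> \<le> sqrt (active_sq_sum B H G q)" if "x\<^sup>2 \<le> active_sq_sum B H G q" for x
    using real_sqrt_le_mono[OF that] by simp
  moreover have "(H$i \<bullet> q)\<^sup>2 \<le> active_sq_sum B H G q" if "i \<in> B" for i
    using member_le_sum[OF that, of "\<lambda>i. (H$i \<bullet> q)\<^sup>2"]
    unfolding active_sq_sum_def by (simp add: sum_nonneg add_increasing2)
  moreover have "(G$j \<bullet> q)\<^sup>2 \<le> active_sq_sum B H G q" for j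
    using member_le_sum[of j UNIV "\<lambda>j. (G$j \<bullet> q)\<^sup>2"]
    unfolding active_sq_sum_def by (simp add: sum_nonneg add_increasing)
  ultimately have "active_abs_sum B H G q
      \<le> (\<Sum>i\<in>B. sqrt (active_sq_sum B H G q)) + (\<Sum>j\<in>(UNIV::'e set). sqrt (active_sq_sum B H G q))"
    unfolding active_abs_sum_def by (intro add_mono sum_mono) auto
  then show ?thesis
    by (simp add: algebra_simps)
qed

lemma active_rows_norm_le_add:
  fixes B :: "'i::finite set"
  shows "active_rows_norm B H G \<le> active_rows_norm B Hs Gs + active_rows_norm B (H - Hs) (G - Gs)"
proof -
  have "(\<Sum>i\<in>B. norm (H$i)) \<le> (\<Sum>i\<in>B. norm (Hs$i) + norm (H$i - Hs$i))"
    and "(\<Sum>j\<in>UNIV. norm (G$j)) \<le> (\<Sum>j\<in>UNIV. norm (Gs$j) + norm (G$j - Gs$j))"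
    by (intro sum_mono norm_triangle_sub)+
  then show ?thesis
    unfolding active_rows_norm_def sum.distrib by simp
qed

lemma entrywise_l1_le_active_rows_norm:
  fixes B :: "'i::finite set" and G :: "real^'n^'e::finite"
  shows "entrywise_l1 G \<le> real CARD('n) * active_rows_norm B H G"
proof -
  have "(\<Sum>j\<in>UNIV. norm (G$j)) \<le> active_rows_norm B H G"
    unfolding active_rows_norm_def by (simp add: sum_nonneg)
  then show ?thesis
    using entrywise_l1_le_rows[of G] by (meson mult_left_mono of_nat_0_le_iff order_trans)
qed

lemma mult_eq_0_if_columns_in_nullspaceA:
  assumes "\<forall>j\<in>-L. column j Z \<in> nullspaceA B H G" "colmask (-L) Z = Z"
  shows "G ** Z = 0"
proof -
  have "column j Z = 0" if "j \<in> L" for j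
    using arg_cong[where f="column j", OF assms(2)] that by (simp add: colmask_def column_def vec_eq_iff)
  then have "G$k \<bullet> column j Z = 0" for k j
    using assms(1) unfolding nullspaceA_iff by (cases "j \<in> L") auto
  then show ?thesis
    by (simp add: vec_eq_iff matrix_matrix_mult_def column_def inner_vec_def)
qed

definition null_space_basis :: "'n set \<Rightarrow> real^'n^'n \<Rightarrow> 'i set \<Rightarrow> real^'n^'i \<Rightarrow> real^'n^'e \<Rightarrow> bool"
  where "null_space_basis L Z B H G \<longleftrightarrow> transpose Z ** Z = diagm (indvec (-L)) \<and> colmask (-L) Z = Z
    \<and> span {column j Z | j. j \<in> -L} = nullspaceA B H G"

section \<open>Uniform constants for LICQ and second-order sufficiency\<close>

lemma coeff_l1_le_norm:
  fixes B :: "'i::finite set" and b :: "'e::finite \<Rightarrow> real"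
  shows "coeff_l1 B a b
    \<le> (real CARD('i) + real CARD('e)) * norm (\<chi> i. if i \<in> B then a i else 0, \<chi> j. b j)"
proof -
  define p where "p = ((\<chi> i. if i \<in> B then a i else 0, \<chi> j. b j) :: (real^'i) \<times> (real^'e))"
  have "\<bar>fst p $ i\<bar> \<le> norm p" and "\<bar>snd p $ j\<bar> \<le> norm p" for i j
    using component_le_norm_cart[of "fst p" i] component_le_norm_cart[of "snd p" j]
      norm_fst_le[where x="fst p" and y="snd p"] norm_snd_le[where x="fst p" and y="snd p"]
    by simp_all
  then have "(\<Sum>i\<in>UNIV. \<bar>fst p $ i\<bar>) \<le> real CARD('i) * norm p"
    and "(\<Sum>j\<in>UNIV. \<bar>snd p $ j\<bar>) \<le> real CARD('e) * norm p"
    using sum_mono[of UNIV "\<lambda>i. \<bar>fst p $ i\<bar>" "\<lambda>_. norm p"] sum_mono[of UNIV "\<lambda>j. \<bar>snd p $ j\<bar>" "\<lambda>_. norm p"]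
    by simp_all
  moreover have "(\<Sum>i\<in>B. \<bar>a i\<bar>) = (\<Sum>i\<in>UNIV. \<bar>fst p $ i\<bar>)" "(\<Sum>j\<in>UNIV. \<bar>b j\<bar>) = (\<Sum>j\<in>UNIV. \<bar>snd p $ j\<bar>)"
    unfolding p_def by (rule sum.mono_neutral_cong_left, auto)
  ultimately show ?thesis
    unfolding coeff_l1_def p_def[symmetric] by (simp add: algebra_simps)
qed

lemma licq_coeff_bound:
  fixes H :: "real^'n::finite^'i::finite" and G :: "real^'n^'e::finite"
  assumes licq: "\<forall>a b. (\<Sum>i\<in>B. a i *\<^sub>R H$i) + (\<Sum>j\<in>UNIV. b j *\<^sub>R G$j) = 0
                 \<longrightarrow> (\<forall>i\<in>B. a i = 0) \<and> (\<forall>j. b j = 0)"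
  obtains c where "c > 0" and "\<And>a b. c * coeff_l1 B a b \<le> norm (active_comb B H G a b)"
proof -
  define S where "S = {p::(real^'i) \<times> (real^'e). \<forall>i. i \<notin> B \<longrightarrow> fst p $ i = 0}"
  define f where "f = (\<lambda>p::(real^'i) \<times> (real^'e). active_comb B H G (\<lambda>i. fst p $ i) (\<lambda>j. snd p $ j))"
  have "subspace S"
    unfolding S_def subspace_def by auto
  moreover have "closed S"
    unfolding S_def Collect_all_eq
    by (intro closed_INT ballI closed_Collect_imp closed_Collect_eq continuous_intros) auto
  moreover have "bounded_linear f"
    unfolding f_def active_comb_def
    by (intro bounded_linear_add bounded_linear_sum bounded_linear_compose[OF _ bounded_linear_fst]
        bounded_linear_compose[OF _ bounded_linear_snd]
        bounded_linear_compose[OF bounded_linear_scaleR_left bounded_linear_vec_nth])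
  moreover have "p = 0" if "p \<in> S" "f p = 0" for p
  proof -
    have "(\<forall>i\<in>B. fst p $ i = 0) \<and> (\<forall>j. snd p $ j = 0)"
      using licq that(2) unfolding f_def active_comb_def by blast
    with \<open>p \<in> S\<close> show "p = 0"
      unfolding S_def by (auto simp: prod_eq_iff vec_eq_iff)
  qed
  ultimately obtain e where "e > 0" and e: "\<forall>p\<in>S. e * norm p \<le> norm (f p)"
    using injective_imp_isometric[of S f] by blast
  define N where "N = real CARD('i) + real CARD('e)"
  have "N > 0"
    unfolding N_def by (simp add: add_pos_pos)
  show thesis
  proof (rule that[of "e / N"])
    show "e / N > 0"
      using \<open>e > 0\<close> \<open>N > 0\<close> by simp
    fix a :: "'i \<Rightarrow> real" and b :: "'e \<Rightarrow> real"
    let ?p = "(\<chi> i. if i \<in> B then a i else 0, \<chi> j. b j) :: (real^'i) \<times> (real^'e)"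
    have "e / N * coeff_l1 B a b \<le> e / N * (N * norm ?p)"
      using coeff_l1_le_norm[of B a b] \<open>e > 0\<close> \<open>N > 0\<close> unfolding N_def by (intro mult_left_mono) auto
    also have "\<dots> \<le> norm (f ?p)"
      using e \<open>N > 0\<close> unfolding S_def by simp
    also have "f ?p = active_comb B H G a b"
      unfolding f_def active_comb_def by (auto intro!: sum.cong)
    finally show "e / N * coeff_l1 B a b \<le> norm (active_comb B H G a b)" .
  qed
qed

lemma licq_coeff_bound_perturb:
  fixes B :: "'i::finite set"
  assumes "\<And>a b. c * coeff_l1 B a b \<le> norm (active_comb B H G a b)"
    and "active_rows_norm B (H' - H) (G' - G) \<le> c / 2"
  shows "c / 2 * coeff_l1 B a b \<le> norm (active_comb B H' G' a b)"
proof -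
  have "norm (active_comb B (H' - H) (G' - G) a b) \<le> coeff_l1 B a b * (c / 2)"
    using norm_active_comb_le[of B "H' - H" "G' - G" a b] assms(2) coeff_l1_nonneg[of B a b]
    by (meson mult_left_mono order_trans)
  moreover have "norm (active_comb B H G a b)
      \<le> norm (active_comb B H' G' a b) + norm (active_comb B (H' - H) (G' - G) a b)"
    using active_comb_diff[of B H' G' a b H G] norm_triangle_ineq4 by (metis add_diff_cancel_right')
  ultimately show ?thesis
    using assms(1)[of a b] by (simp add: algebra_simps)
qed

lemma span_active_rows_subset:
  fixes B :: "'i::finite set" and H :: "real^'n^'i" and G :: "real^'n^'e::finite"
  shows "span ((\<lambda>i. H$i) ` B \<union> range (\<lambda>j. G$j)) \<subseteq> {active_comb B H G a b | a b. True}"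
proof (rule span_minimal)
  have "H$i = active_comb B H G (\<lambda>k. if k = i then 1 else 0) (\<lambda>_. 0)" if "i \<in> B" for i
    using that by (simp add: active_comb_def if_distrib[of "\<lambda>r. r *\<^sub>R _"] cong: if_cong)
  moreover have "G$j = active_comb B H G (\<lambda>_. 0) (\<lambda>k. if k = j then 1 else 0)" for j
    by (simp add: active_comb_def if_distrib[of "\<lambda>r. r *\<^sub>R _"] cong: if_cong)
  ultimately show "(\<lambda>i. H$i) ` B \<union> range (\<lambda>j. G$j) \<subseteq> {active_comb B H G a b | a b. True}"
    by blast
  have add: "active_comb B H G a b + active_comb B H G a' b'
      = active_comb B H G (\<lambda>i. a i + a' i) (\<lambda>j. b j + b' j)"
    and scale: "t *\<^sub>R active_comb B H G a b = active_comb B H G (\<lambda>i. t * a i) (\<lambda>j. t * b j)"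
    and zero: "0 = active_comb B H G (\<lambda>_. 0) (\<lambda>_. 0)" for a a' b b' t
    by (simp_all add: active_comb_def scaleR_add_left sum.distrib scaleR_sum_right algebra_simps)
  show "subspace {active_comb B H G a b | a b. True}"
    unfolding subspace_def
  proof (intro conjI ballI allI)
    show "0 \<in> {active_comb B H G a b | a b. True}"
      using zero by blast
  next
    fix x y assume "x \<in> {active_comb B H G a b | a b. True}" "y \<in> {active_comb B H G a b | a b. True}"
    then show "x + y \<in> {active_comb B H G a b | a b. True}"
      using add by blast
  next
    fix t x assume "x \<in> {active_comb B H G a b | a b. True}"
    then show "t *\<^sub>R x \<in> {active_comb B H G a b | a b. True}"
      using scale by blast
  qed
qed

lemma active_orthogonal_decomposition:
  fixes B :: "'i::finite set" and H :: "real^'n^'i" and G :: "real^'n^'e::finite"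
  assumes c: "c > 0" and licq: "\<And>a b. c * coeff_l1 B a b \<le> norm (active_comb B H G a b)"
  obtains \<rho> \<nu> where "u = \<rho> + \<nu>" and "\<nu> \<in> nullspaceA B H G" and "\<rho> \<bullet> \<nu> = 0"
    and "c * norm \<rho> \<le> active_abs_sum B H G u"
proof -
  let ?R = "(\<lambda>i. H$i) ` B \<union> range (\<lambda>j. G$j)"
  obtain \<rho> \<nu> where \<rho>: "\<rho> \<in> span ?R" and \<nu>: "\<And>w. w \<in> span ?R \<Longrightarrow> orthogonal \<nu> w"
    and u: "u = \<rho> + \<nu>"
    using orthogonal_subspace_decomp_exists by metis
  have "w \<bullet> \<nu> = 0" if "w \<in> ?R" for w
    using \<nu>[OF span_base[OF that]] by (simp add: orthogonal_def inner_commute)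
  then have "\<nu> \<in> nullspaceA B H G"
    unfolding nullspaceA_iff by blast
  moreover have \<rho>\<nu>: "\<rho> \<bullet> \<nu> = 0"
    using \<nu>[OF \<rho>] by (simp add: orthogonal_def inner_commute)
  moreover have "c * norm \<rho> \<le> active_abs_sum B H G u"
  proof -
    obtain a b where ab: "\<rho> = active_comb B H G a b"
      using span_active_rows_subset \<rho> by blast
    have "norm \<rho> ^ 2 = \<rho> \<bullet> u"
      using \<rho>\<nu> u by (simp add: inner_add_right power2_norm_eq_inner)
    also have "\<dots> \<le> coeff_l1 B a b * active_abs_sum B H G u"
      using active_comb_inner_le[of B H G a b u] ab by simp
    finally have "c * norm \<rho> ^ 2 \<le> c * coeff_l1 B a b * active_abs_sum B H G u"
      using c by (simp add: mult.assoc)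
    also have "\<dots> \<le> norm \<rho> * active_abs_sum B H G u"
      using licq[of a b] ab active_abs_sum_nonneg[of B H G u] by (simp add: mult_right_mono)
    finally have "norm \<rho> * (c * norm \<rho>) \<le> norm \<rho> * active_abs_sum B H G u"
      by (simp add: power2_eq_square mult_ac)
    then show ?thesis
      using active_abs_sum_nonneg[of B H G u] by (cases "norm \<rho> = 0") (auto simp: mult_le_cancel_left)
  qed
  ultimately show thesis
    using that u by blast
qed

lemma quadratic_form_coercive_on_subspace:
  fixes W :: "real^'n^'n"
  assumes pos: "\<forall>d. d \<noteq> 0 \<and> d \<in> N \<longrightarrow> d \<bullet> (W *v d) > 0" and N: "subspace N"
  obtains \<mu> where "\<mu> > 0" and "\<And>d. d \<in> N \<Longrightarrow> \<mu> * (norm d)\<^sup>2 \<le> d \<bullet> (W *v d)"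
proof -
  define S where "S = N \<inter> sphere 0 1"
  have normalize: "d /\<^sub>R norm d \<in> S"
    and quad_normalize: "(d /\<^sub>R norm d) \<bullet> (W *v (d /\<^sub>R norm d)) = (d \<bullet> (W *v d)) / (norm d)\<^sup>2"
    if "d \<in> N" "d \<noteq> 0" for d
    using that N by (auto simp: S_def subspace_scale matrix_vector_mult_scaleR power2_eq_square
        divide_inverse)
  show thesis
  proof (cases "S = {}")
    case True
    then have "\<forall>d\<in>N. d = 0"
      using normalize by blast
    then show ?thesis
      using that[of 1] by fastforce
  next
    case False
    have "compact S"
      unfolding S_def by (intro closed_Int_compact closed_subspace N compact_sphere)
    moreover have "continuous_on S (\<lambda>d. d \<bullet> (W *v d))"
      by (intro continuous_intros linear_continuous_on matrix_vector_mul_linear)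
    ultimately obtain p where pS: "p \<in> S" and pmin: "\<forall>q\<in>S. p \<bullet> (W *v p) \<le> q \<bullet> (W *v q)"
      using continuous_attains_inf False by blast
    have "p \<noteq> 0" "p \<in> N"
      using pS unfolding S_def by auto
    then have "p \<bullet> (W *v p) > 0"
      using pos by blast
    moreover have "(p \<bullet> (W *v p)) * (norm d)\<^sup>2 \<le> d \<bullet> (W *v d)" if "d \<in> N" for d
    proof (cases "d = 0")
      case False
      then have "p \<bullet> (W *v p) \<le> (d \<bullet> (W *v d)) / (norm d)\<^sup>2"
        using pmin normalize quad_normalize that by metis
      then show ?thesis
        using False by (simp add: pos_le_divide_eq)
    qed simp
    ultimately show thesis
      using that by blast
  qed
qed

section \<open>Lower bounds for the eigenvalues\<close>

lemma quadratic_form_near_subspace: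
  fixes Ws :: "real^'n^'n"
  assumes coercive: "\<forall>u\<in>N. \<mu> * (norm u)\<^sup>2 \<le> u \<bullet> (Ws *v u)" and "\<mu> > 0"
    and q: "norm q = 1" "q = \<rho> + \<nu>" "\<nu> \<in> N" and \<rho>: "norm \<rho> \<le> \<eta>" "\<eta> \<le> 1"
  shows "\<mu> - (2 * \<mu> + 3 * entrywise_l1 Ws) * \<eta> \<le> q \<bullet> (Ws *v q)"
proof -
  have \<eta>: "0 \<le> \<eta>"
    using \<rho> norm_ge_zero order_trans by blast
  have \<nu>: "1 - \<eta> \<le> norm \<nu>" "norm \<nu> \<le> 1 + \<eta>"
    using q \<rho> norm_triangle_ineq[of \<rho> \<nu>] norm_triangle_ineq4[of q \<rho>] by (simp_all add: algebra_simps)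
  have "\<mu> * (1 - 2 * \<eta>) \<le> \<mu> * (1 - \<eta>)\<^sup>2"
    using \<open>\<mu> > 0\<close> by (intro mult_left_mono) (auto simp: power2_eq_square algebra_simps)
  also have "\<dots> \<le> \<mu> * (norm \<nu>)\<^sup>2"
    using \<nu> \<rho> \<open>\<mu> > 0\<close> by (intro mult_left_mono power_mono) auto
  also have "\<dots> \<le> \<nu> \<bullet> (Ws *v \<nu>)"
    using coercive q by blast
  finally have main: "\<mu> * (1 - 2 * \<eta>) \<le> \<nu> \<bullet> (Ws *v \<nu>)" .
  have "\<bar>\<rho> \<bullet> (Ws *v q)\<bar> \<le> entrywise_l1 Ws * \<eta>"
    using inner_matrix_vector_le[of \<rho> Ws q] q \<rho> entrywise_l1_nonneg[of Ws]
    by (metis mult.right_neutral mult_left_mono order_trans)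
  moreover have "\<bar>\<nu> \<bullet> (Ws *v \<rho>)\<bar> \<le> entrywise_l1 Ws * (2 * \<eta>)"
  proof -
    have "\<bar>\<nu> \<bullet> (Ws *v \<rho>)\<bar> \<le> entrywise_l1 Ws * norm \<nu> * norm \<rho>"
      by (rule inner_matrix_vector_le)
    also have "\<dots> \<le> entrywise_l1 Ws * 2 * \<eta>"
      using \<nu> \<rho> \<eta> entrywise_l1_nonneg[of Ws] by (intro mult_mono) auto
    finally show ?thesis by simp
  qed
  moreover have "q \<bullet> (Ws *v q) = \<nu> \<bullet> (Ws *v \<nu>) + \<rho> \<bullet> (Ws *v q) + \<nu> \<bullet> (Ws *v \<rho>)"
    unfolding q by (simp add: inner_add_left inner_add_right matrix_vector_right_distrib)
  ultimately show ?thesis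
    using main by (simp add: algebra_simps abs_le_iff)
qed

lemma eigenvalue_lower_near_nullspace:
  fixes Q W Ws :: "real^'n^'n" and H Hs :: "real^'n^'i::finite" and G Gs :: "real^'n^'e::finite"
  assumes licq: "\<And>a b. c * coeff_l1 B a b \<le> norm (active_comb B Hs Gs a b)" and "c > 0"
    and coercive: "\<forall>u\<in>nullspaceA B Hs Gs. \<mu> * (norm u)\<^sup>2 \<le> u \<bullet> (Ws *v u)" and "\<mu> > 0"
    and Q: "orthogonal_matrix Q" and KW: "\<forall>q. q \<bullet> (W *v q) \<le> q \<bullet> ((Q ** diagm d ** transpose Q) *v q)"
    and z: "z \<in> nullspaceA B H G" "norm (column j Q - z) \<le> E"
    and \<eta>: "active_rows_norm B H G * E + active_rows_norm B (H - Hs) (G - Gs) \<le> c * \<eta>" "\<eta> \<le> 1"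
      "(2 * \<mu> + 3 * entrywise_l1 Ws) * \<eta> \<le> \<mu> / 4"
    and W: "entrywise_l1 (W - Ws) \<le> \<mu> / 4"
  shows "\<mu> / 2 \<le> d$j"
proof -
  define q where "q = column j Q"
  have q1: "norm q = 1"
    unfolding q_def by (rule norm_column_orthogonal_matrix[OF Q])
  have "active_abs_sum B H G q = active_abs_sum B H G (q - z)"
    using active_abs_sum_add_null[OF z(1), of "q - z"] by simp
  also have "\<dots> \<le> active_rows_norm B H G * E"
    using active_abs_sum_le[of B H G "q - z"] z(2) active_rows_norm_nonneg[of B H G] unfolding q_def
    by (meson mult_left_mono order_trans)
  finally have "active_abs_sum B Hs Gs q \<le> c * \<eta>"
    using active_abs_sum_perturb[of B Hs Gs q H G] q1 \<eta>(1) by simp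
  moreover obtain \<rho> \<nu> where dec: "q = \<rho> + \<nu>" "\<nu> \<in> nullspaceA B Hs Gs"
    and "c * norm \<rho> \<le> active_abs_sum B Hs Gs q"
    using active_orthogonal_decomposition[OF \<open>c > 0\<close> licq] by blast
  ultimately have "norm \<rho> \<le> \<eta>"
    using \<open>c > 0\<close> by (meson mult_le_cancel_left_pos order_trans)
  then have "3 * \<mu> / 4 \<le> q \<bullet> (Ws *v q)"
    using quadratic_form_near_subspace[OF coercive \<open>\<mu> > 0\<close> q1 dec _ \<eta>(2)] \<eta>(3) by linarith
  moreover have "\<bar>q \<bullet> ((W - Ws) *v q)\<bar> \<le> \<mu> / 4"
    using inner_matrix_vector_le[of q "W - Ws" q] q1 W by simp
  then have "q \<bullet> (Ws *v q) - \<mu> / 4 \<le> q \<bullet> (W *v q)"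
    unfolding matrix_vector_mult_diff_rdistrib inner_diff_right by linarith
  moreover have "d$j = q \<bullet> ((Q ** diagm d ** transpose Q) *v q)"
    unfolding q_def by (simp add: spectral_eigenvalue_quadratic[OF Q])
  ultimately show ?thesis
    using KW[rule_format, of q] by linarith
qed

lemma inner_span_columns_le:
  fixes Q Z :: "real^'n^'n"
  assumes Q: "orthogonal_matrix Q" and "i \<in> L"
    and Z: "transpose Z ** Z = diagm (indvec (-L))" "\<nu> \<in> span {column j Z | j. j \<in> -L}"
    and QZ: "\<forall>j\<in>-L. norm (column j Q - column j Z) \<le> E" and "0 \<le> E"
  shows "\<bar>\<nu> \<bullet> column i Q\<bar> \<le> real CARD('n) * (norm \<nu> * E)"
proof -
  have "{column j Z | j. j \<in> -L} = (\<lambda>j. column j Z) ` (-L)"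
    by auto
  then have \<nu>: "\<nu> = (\<Sum>j\<in>-L. (column j Z \<bullet> \<nu>) *\<^sub>R column j Z)"
    using Z column_inner_of_gram[OF Z(1)] by (intro span_orthonormal_expansion) auto
  \<comment> \<open>the columns of Q outside L are orthogonal to column i Q and close to those of Z\<close>
  have "\<bar>(column j Z \<bullet> \<nu>) * (column j Z \<bullet> column i Q)\<bar> \<le> norm \<nu> * E" if "j \<in> -L" for j
  proof -
    have "norm (column j Z) = 1"
      using column_inner_of_gram[OF Z(1) that that] by (simp add: norm_eq_1)
    then have "\<bar>column j Z \<bullet> \<nu>\<bar> \<le> norm \<nu>"
      using Cauchy_Schwarz_ineq2[of "column j Z" \<nu>] by simp
    moreover have "column j Z \<bullet> column i Q = (column j Z - column j Q) \<bullet> column i Q"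
      using orthogonal_matrix_column_inner[OF Q, of j i] that \<open>i \<in> L\<close> by (auto simp: inner_diff_left)
    then have "\<bar>column j Z \<bullet> column i Q\<bar> \<le> E"
      using Cauchy_Schwarz_ineq2[of "column j Z - column j Q" "column i Q"] QZ that
        norm_column_orthogonal_matrix[OF Q, of i]
      by (simp add: norm_minus_commute) (meson ComplI order_trans)
    ultimately show ?thesis
      unfolding abs_mult by (intro mult_mono) auto
  qed
  then have "\<bar>\<Sum>j\<in>-L. (column j Z \<bullet> \<nu>) * (column j Z \<bullet> column i Q)\<bar> \<le> (\<Sum>j\<in>-L. norm \<nu> * E)"
    by (intro order_trans[OF sum_abs] sum_mono) auto
  then have "\<bar>\<nu> \<bullet> column i Q\<bar> \<le> (\<Sum>j\<in>-L. norm \<nu> * E)"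
    by (subst \<nu>) (simp add: inner_sum_left)
  also have "\<dots> \<le> real CARD('n) * (norm \<nu> * E)"
    using card_mono[of UNIV "-L"] \<open>0 \<le> E\<close> by (simp add: mult_right_mono)
  finally show ?thesis .
qed

lemma column_far_from_nullspace:
  fixes Q Z :: "real^'n^'n" and H :: "real^'n^'i::finite" and G :: "real^'n^'e::finite"
  assumes "c > 0" and licq: "\<And>a b. c * coeff_l1 B a b \<le> norm (active_comb B H G a b)"
    and Q: "orthogonal_matrix Q" and "i \<in> L"
    and Z: "transpose Z ** Z = diagm (indvec (-L))" "nullspaceA B H G \<subseteq> span {column j Z | j. j \<in> -L}"
    and QZ: "\<forall>j\<in>-L. norm (column j Q - column j Z) \<le> E" and E: "0 \<le> E" "real CARD('n) * E \<le> 1 / 2"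
  shows "c / 2 \<le> active_abs_sum B H G (column i Q)"
proof -
  obtain \<rho> \<nu> where dec: "column i Q = \<rho> + \<nu>" "\<rho> \<bullet> \<nu> = 0" and \<nu>: "\<nu> \<in> nullspaceA B H G"
    and \<rho>: "c * norm \<rho> \<le> active_abs_sum B H G (column i Q)"
    using active_orthogonal_decomposition[OF \<open>c > 0\<close> licq] by metis
  have "norm \<nu> * norm \<nu> = \<nu> \<bullet> column i Q"
    using dec by (simp add: inner_add_right inner_commute flip: power2_eq_square power2_norm_eq_inner)
  also have "\<dots> \<le> real CARD('n) * (norm \<nu> * E)"
    using inner_span_columns_le[OF Q \<open>i \<in> L\<close> Z(1) _ QZ E(1)] \<nu> Z(2) by fastforce
  also have "\<dots> \<le> norm \<nu> * (1 / 2)"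
    using mult_left_mono[OF E(2) norm_ge_zero[of \<nu>]] by (simp add: mult_ac)
  finally have "norm \<nu> \<le> 1 / 2"
    by (cases "norm \<nu> = 0") (auto simp: mult_le_cancel_left)
  then have "c * (1 / 2) \<le> c * norm \<rho>"
    using dec norm_column_orthogonal_matrix[OF Q, of i] norm_triangle_ineq[of \<rho> \<nu>] \<open>c > 0\<close>
    by (intro mult_left_mono) auto
  then show ?thesis
    using \<rho> by simp
qed

lemma eigenvalue_lower_far_from_nullspace:
  fixes Q W Z :: "real^'n^'n" and H :: "real^'n^'i::finite" and G :: "real^'n^'e::finite"
  assumes "c > 0" and licq: "\<And>a b. c * coeff_l1 B a b \<le> norm (active_comb B H G a b)"
    and Q: "orthogonal_matrix Q" and "i \<in> L"
    and KW: "\<forall>q. q \<bullet> (W *v q) + \<kappa> * active_sq_sum B H G q \<le> q \<bullet> ((Q ** diagm d ** transpose Q) *v q)"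
    and "\<kappa> \<ge> 0"
    and Z: "transpose Z ** Z = diagm (indvec (-L))" "nullspaceA B H G \<subseteq> span {column j Z | j. j \<in> -L}"
    and QZ: "\<forall>j\<in>-L. norm (column j Q - column j Z) \<le> E" and E: "0 \<le> E" "real CARD('n) * E \<le> 1 / 2"
  shows "\<kappa> * (c / (2 * (real (card B) + real CARD('e))))\<^sup>2 - entrywise_l1 W \<le> d$i"
proof -
  define q where "q = column i Q"
  define N where "N = real (card B) + real CARD('e)"
  have "N > 0"
    unfolding N_def by (simp add: add_nonneg_pos)
  have "c / 2 \<le> N * sqrt (active_sq_sum B H G q)"
    using column_far_from_nullspace[OF \<open>c > 0\<close> licq Q \<open>i \<in> L\<close> Z QZ E]
      active_abs_sum_le_sq_sum[of B H G q] unfolding q_def N_def by linarith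
  then have "c / (2 * N) \<le> sqrt (active_sq_sum B H G q)"
    using \<open>N > 0\<close> by (simp add: field_simps)
  then have "(c / (2 * N))\<^sup>2 \<le> (sqrt (active_sq_sum B H G q))\<^sup>2"
    using \<open>c > 0\<close> \<open>N > 0\<close> by (intro power_mono) auto
  also have "\<dots> = active_sq_sum B H G q"
    unfolding active_sq_sum_def by (intro real_sqrt_pow2 add_nonneg_nonneg sum_nonneg) auto
  finally have "(c / (2 * N))\<^sup>2 \<le> active_sq_sum B H G q" .
  then have "\<kappa> * (c / (2 * N))\<^sup>2 \<le> \<kappa> * active_sq_sum B H G q"
    using \<open>\<kappa> \<ge> 0\<close> by (rule mult_left_mono)
  moreover have "\<bar>q \<bullet> (W *v q)\<bar> \<le> entrywise_l1 W"
    using inner_matrix_vector_le[of q W q] norm_column_orthogonal_matrix[OF Q, of i]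
    unfolding q_def by simp
  moreover have "d$i = q \<bullet> ((Q ** diagm d ** transpose Q) *v q)"
    unfolding q_def by (simp add: spectral_eigenvalue_quadratic[OF Q])
  ultimately show ?thesis
    using KW[rule_format, of q] unfolding N_def by (simp add: abs_le_iff)
qed

section \<open>The Schur complement\<close>

lemma schur_complement_error_split:
  fixes Q Y Z :: "real^'n^'n" and G :: "real^'n^'e" and d :: "real^'n" and L :: "'n set"
  assumes GZ: "G ** Z = 0"
  defines "EL \<equiv> diagm (\<chi> j. if j \<in> L then 1 / d$j else 0)"
    and "ES \<equiv> diagm (\<chi> j. if j \<in> -L then 1 / d$j else 0)"
  shows "G ** (Q ** diagm (\<chi> j. 1 / d$j) ** transpose Q) ** transpose G - G ** Y ** EL ** transpose Y ** transpose G
    = G ** ((colmask L Q - Y) ** EL ** transpose (colmask L Q) + Y ** EL ** transpose (colmask L Q - Y))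
        ** transpose G
      + (G ** (colmask (-L) Q - Z)) ** ES ** transpose (G ** (colmask (-L) Q - Z))"
proof -
  define QL QS where "QL = colmask L Q" and "QS = colmask (-L) Q"
  define P R S where "P = QL ** EL ** transpose QL" and "R = Y ** EL ** transpose Y"
    and "S = QS ** ES ** transpose QS"
  have "Q ** diagm (\<chi> j. 1 / d$j) ** transpose Q = P + S"
    unfolding P_def S_def QL_def QS_def EL_def ES_def by (rule spectral_colmask_split)
  then have "G ** (Q ** diagm (\<chi> j. 1 / d$j) ** transpose Q) ** transpose G - G ** Y ** EL ** transpose Y ** transpose G
      = G ** (P - R) ** transpose G + G ** S ** transpose G"
    unfolding R_def
    by (simp add: matrix_add_ldistrib matrix_mul_add_right matrix_mul_diff_left matrix_mul_diff_right
        matrix_mul_assoc)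
  moreover have "P - R = (QL - Y) ** EL ** transpose QL + Y ** EL ** transpose (QL - Y)"
    unfolding P_def R_def transpose_diff by (simp add: matrix_mul_diff_left matrix_mul_diff_right)
  moreover have "G ** S ** transpose G = (G ** (QS - Z)) ** ES ** transpose (G ** (QS - Z))"
    using GZ unfolding S_def by (simp add: matrix_mul_diff_left matrix_transpose_mul matrix_mul_assoc)
  ultimately show ?thesis
    unfolding QL_def QS_def by simp
qed

lemma schur_complement_error_bound:
  fixes Q Y Z :: "real^'n^'n" and G :: "real^'n^'e"
  assumes Q: "orthogonal_matrix Q"
    and dL: "\<forall>j\<in>L. lL \<le> d$j" "lL > 0" and dS: "\<forall>j\<in>-L. lS \<le> d$j" "lS > 0"
    and GZ: "G ** Z = 0"
    and Y: "entrywise_l1 (colmask L Q - Y) \<le> \<epsilon>" and Z: "entrywise_l1 (colmask (-L) Q - Z) \<le> \<epsilon>"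
    and G: "entrywise_l1 G \<le> g"
  shows "entrywise_l1 (G ** (Q ** diagm (\<chi> j. 1 / d$j) ** transpose Q) ** transpose G
            - G ** Y ** diagm (\<chi> j. if j \<in> L then 1 / d$j else 0) ** transpose Y ** transpose G)
         \<le> g * (\<epsilon> * (real CARD('n) / lL) * (2 * real CARD('n) ^ 2 + \<epsilon>)) * g
           + (g * \<epsilon>) * (real CARD('n) / lS) * (g * \<epsilon>)"
proof -
  define n where "n = real CARD('n)"
  define QL EL where "QL = colmask L Q" and "EL = (diagm (\<chi> j. if j \<in> L then 1 / d$j else 0) :: real^'n^'n)"
  have QL: "entrywise_l1 QL \<le> n\<^sup>2"
    unfolding QL_def n_def by (rule entrywise_l1_colmask_orthogonal[OF Q])
  have EL: "entrywise_l1 EL \<le> n / lL"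
    unfolding EL_def n_def by (rule entrywise_l1_diagm_inverse[OF dL])
  have ES: "entrywise_l1 (diagm (\<chi> j. if j \<in> -L then 1 / d$j else 0) :: real^'n^'n) \<le> n / lS"
    unfolding n_def by (rule entrywise_l1_diagm_inverse[OF dS])
  have "entrywise_l1 Y \<le> n\<^sup>2 + \<epsilon>"
    using entrywise_l1_diff[of QL "QL - Y"] QL Y unfolding QL_def by simp
  then have "entrywise_l1 (Y ** EL ** transpose (QL - Y)) \<le> (n\<^sup>2 + \<epsilon>) * (n / lL) * \<epsilon>"
    using EL Y unfolding QL_def by (intro entrywise_l1_mult3_le) (simp_all add: entrywise_l1_transpose)
  moreover have "entrywise_l1 ((QL - Y) ** EL ** transpose QL) \<le> \<epsilon> * (n / lL) * n\<^sup>2"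
    using EL Y QL unfolding QL_def by (intro entrywise_l1_mult3_le) (simp_all add: entrywise_l1_transpose)
  ultimately have "entrywise_l1 ((QL - Y) ** EL ** transpose QL + Y ** EL ** transpose (QL - Y))
      \<le> \<epsilon> * (n / lL) * n\<^sup>2 + (n\<^sup>2 + \<epsilon>) * (n / lL) * \<epsilon>"
    by (meson add_mono entrywise_l1_add order_trans)
  also have "\<dots> = \<epsilon> * (n / lL) * (2 * n\<^sup>2 + \<epsilon>)"
    by (simp add: algebra_simps)
  finally have "entrywise_l1 (G ** ((QL - Y) ** EL ** transpose QL + Y ** EL ** transpose (QL - Y)) ** transpose G)
      \<le> g * (\<epsilon> * (n / lL) * (2 * n\<^sup>2 + \<epsilon>)) * g"
    using G by (intro entrywise_l1_mult3_le) (simp_all add: entrywise_l1_transpose)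
  moreover have "entrywise_l1 (G ** (colmask (-L) Q - Z)) \<le> g * \<epsilon>"
    using entrywise_l1_mult[of G "colmask (-L) Q - Z"] G Z entrywise_l1_nonneg[of G] entrywise_l1_nonneg[of "colmask (-L) Q - Z"]
    by (meson mult_mono order_trans)
  then have "entrywise_l1 ((G ** (colmask (-L) Q - Z)) ** diagm (\<chi> j. if j \<in> -L then 1 / d$j else 0)
      ** transpose (G ** (colmask (-L) Q - Z))) \<le> (g * \<epsilon>) * (n / lS) * (g * \<epsilon>)"
    using ES by (intro entrywise_l1_mult3_le) (simp_all add: entrywise_l1_transpose)
  ultimately show ?thesis
    unfolding schur_complement_error_split[OF GZ] QL_def EL_def n_def
    by (meson add_mono entrywise_l1_add order_trans)
qed

lemma schur_error_le_square:
  fixes g n cE \<Xi> \<theta> \<mu> :: real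
  assumes "0 < \<Xi>" "0 \<le> cE" "cE * \<Xi> \<le> 1" "0 < \<theta>" "0 < \<mu>" "0 \<le> n"
  shows "g * (cE * \<Xi> * (n / (\<theta> / \<Xi>)) * (2 * n ^ 2 + cE * \<Xi>)) * g
      + (g * (cE * \<Xi>)) * (n / (\<mu> / 2)) * (g * (cE * \<Xi>))
    \<le> g\<^sup>2 * (cE * (n / \<theta>) * (2 * n\<^sup>2 + 1) + cE\<^sup>2 * (2 * n / \<mu>)) * \<Xi>\<^sup>2"
proof -
  have "(g\<^sup>2 * cE * (n / \<theta>) * \<Xi>\<^sup>2) * (2 * n ^ 2 + cE * \<Xi>) \<le> (g\<^sup>2 * cE * (n / \<theta>) * \<Xi>\<^sup>2) * (2 * n ^ 2 + 1)"
    using assms by (intro mult_left_mono) auto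
  then show ?thesis
    using assms by (simp add: field_simps power2_eq_square)
qed

section \<open>Matrices close to a reference KKT point\<close>

locale kkt_reference =
  fixes B :: "'i::finite set" and Hs :: "real^'n::finite^'i" and Gs :: "real^'n^'e::finite"
    and Ws :: "real^'n^'n" and c0 \<mu> :: real
  assumes c0_pos: "c0 > 0" and licq: "\<And>a b. c0 * coeff_l1 B a b \<le> norm (active_comb B Hs Gs a b)"
    and \<mu>_pos: "\<mu> > 0" and coercive: "\<forall>u\<in>nullspaceA B Hs Gs. \<mu> * (norm u)\<^sup>2 \<le> u \<bullet> (Ws *v u)"
begin

text \<open>A unit vector \<open>q\<close> within distance \<open>sosc_margin\<close> of the reference null space still has
  \<open>q \<bullet> (Ws *v q) \<ge> 3 \<mu> / 4\<close> (lemma \<open>quadratic_form_near_subspace\<close>).\<close>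

definition sosc_margin :: real
  where "sosc_margin = min 1 (\<mu> / (4 * (2 * \<mu> + 3 * entrywise_l1 Ws)))"

definition radius :: real
  where "radius = min (min (c0 * sosc_margin / 2) 1) (\<mu> / 4)"

definition large_gap :: "real \<Rightarrow> real"
  where "large_gap \<kappa> = \<kappa> * (c0 / (4 * (real (card B) + real CARD('e))))\<^sup>2 / 2"

lemma sosc_margin_bounds: "0 < sosc_margin" "sosc_margin \<le> 1" "(2 * \<mu> + 3 * entrywise_l1 Ws) * sosc_margin \<le> \<mu> / 4"
  using \<mu>_pos entrywise_l1_nonneg[of Ws] unfolding sosc_margin_def by (auto simp: field_simps min_def)

lemma radius_pos: "0 < radius"
  unfolding radius_def using c0_pos \<mu>_pos sosc_margin_bounds(1) by simp

lemma large_gap_pos: "0 < \<kappa> \<Longrightarrow> 0 < large_gap \<kappa>"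
proof -
  have "0 < real (card B) + real CARD('e)"
    by (simp add: add_nonneg_pos)
  then show "0 < \<kappa> \<Longrightarrow> 0 < large_gap \<kappa>"
    unfolding large_gap_def using c0_pos by simp
qed

lemma small_eigenvalue_lower:
  fixes Q W :: "real^'n^'n" and H :: "real^'n^'i" and G :: "real^'n^'e"
  assumes near: "active_rows_norm B (H - Hs) (G - Gs) \<le> radius" "entrywise_l1 (W - Ws) \<le> radius"
    and E: "(active_rows_norm B Hs Gs + 1) * E \<le> c0 * sosc_margin / 2"
    and Q: "orthogonal_matrix Q" and KW: "\<forall>q. q \<bullet> (W *v q) \<le> q \<bullet> ((Q ** diagm d ** transpose Q) *v q)"
    and z: "z \<in> nullspaceA B H G" "norm (column j Q - z) \<le> E"
  shows "\<mu> / 2 \<le> d$j"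
proof -
  have "E \<ge> 0"
    using z(2) norm_ge_zero order_trans by blast
  have "active_rows_norm B H G \<le> active_rows_norm B Hs Gs + 1"
    using active_rows_norm_le_add[of B H G Hs Gs] near(1) unfolding radius_def by linarith
  then have "active_rows_norm B H G * E \<le> c0 * sosc_margin / 2"
    using E \<open>E \<ge> 0\<close> by (meson mult_right_mono order_trans)
  then have "active_rows_norm B H G * E + active_rows_norm B (H - Hs) (G - Gs) \<le> c0 * sosc_margin"
    using near(1) unfolding radius_def by linarith
  moreover have "entrywise_l1 (W - Ws) \<le> \<mu> / 4"
    using near(2) unfolding radius_def by linarith
  ultimately show ?thesis
    using eigenvalue_lower_near_nullspace[OF licq c0_pos coercive \<mu>_pos Q KW z] sosc_margin_bounds(2,3) by blast
qed

lemma large_eigenvalue_lower: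
  fixes Q W Z :: "real^'n^'n" and H :: "real^'n^'i" and G :: "real^'n^'e"
  assumes near: "active_rows_norm B (H - Hs) (G - Gs) \<le> radius" "entrywise_l1 (W - Ws) \<le> radius"
    and "\<kappa> \<ge> 0" "\<Xi> > 0" and small: "\<Xi> * (entrywise_l1 Ws + 1) \<le> large_gap \<kappa>"
    and Q: "orthogonal_matrix Q" and "i \<in> L"
    and KW: "\<forall>q. q \<bullet> (W *v q) + \<kappa> / \<Xi> * active_sq_sum B H G q \<le> q \<bullet> ((Q ** diagm d ** transpose Q) *v q)"
    and Z: "transpose Z ** Z = diagm (indvec (-L))" "nullspaceA B H G \<subseteq> span {column j Z | j. j \<in> -L}"
    and QZ: "\<forall>j\<in>-L. norm (column j Q - column j Z) \<le> E" and E: "0 \<le> E" "real CARD('n) * E \<le> 1 / 2"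
  shows "large_gap \<kappa> / \<Xi> \<le> d$i"
proof -
  have "c0 * sosc_margin \<le> c0"
    using sosc_margin_bounds(2) c0_pos by (simp add: mult_left_le)
  then have "active_rows_norm B (H - Hs) (G - Gs) \<le> c0 / 2"
    using near(1) unfolding radius_def by linarith
  then have licq_iterate: "c0 / 2 * coeff_l1 B a b \<le> norm (active_comb B H G a b)" for a b
    using licq_coeff_bound_perturb[OF licq] by blast
  have "entrywise_l1 W \<le> entrywise_l1 Ws + 1"
    using entrywise_l1_add[of Ws "W - Ws"] near(2) unfolding radius_def by simp
  also have "\<dots> \<le> large_gap \<kappa> / \<Xi>"
    using small \<open>\<Xi> > 0\<close> by (simp add: field_simps)
  finally have "2 * large_gap \<kappa> / \<Xi> - large_gap \<kappa> / \<Xi> \<le> d$i"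
    using eigenvalue_lower_far_from_nullspace[of "c0 / 2", OF _ licq_iterate Q \<open>i \<in> L\<close> KW _ Z QZ E]
      c0_pos \<open>\<kappa> \<ge> 0\<close> \<open>\<Xi> > 0\<close> unfolding large_gap_def by (simp add: field_simps)
  then show ?thesis
    by simp
qed

lemma entrywise_l1_jacobian_le:
  "active_rows_norm B (H - Hs) (G - Gs) \<le> radius \<Longrightarrow> entrywise_l1 G \<le> entrywise_l1 Gs + real CARD('n)"
proof -
  assume "active_rows_norm B (H - Hs) (G - Gs) \<le> radius"
  then have "real CARD('n) * active_rows_norm B (H - Hs) (G - Gs) \<le> real CARD('n) * 1"
    unfolding radius_def by (intro mult_left_mono) auto
  then have "entrywise_l1 (G - Gs) \<le> real CARD('n)"
    using entrywise_l1_le_active_rows_norm[of "G - Gs" B "H - Hs"] by linarith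
  then show ?thesis
    using entrywise_l1_add[of Gs "G - Gs"] by simp
qed

lemma spectrum_separated:
  fixes Q W Z :: "real^'n^'n" and H :: "real^'n^'i" and G :: "real^'n^'e"
  assumes near: "active_rows_norm B (H - Hs) (G - Gs) \<le> radius" "entrywise_l1 (W - Ws) \<le> radius"
    and "\<kappa> > 0" "0 < \<Xi>" "0 \<le> E"
    and small: "(active_rows_norm B Hs Gs + 1) * E \<le> c0 * sosc_margin / 2" "real CARD('n) * E \<le> 1 / 2"
      "\<Xi> * (entrywise_l1 Ws + 1) \<le> large_gap \<kappa>"
    and Q: "orthogonal_matrix Q"
    and KW: "\<forall>q. q \<bullet> (W *v q) + \<kappa> / \<Xi> * active_sq_sum B H G q \<le> q \<bullet> ((Q ** diagm d ** transpose Q) *v q)"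
    and Z: "null_space_basis L Z B H G" and Z_err: "entrywise_l1 (colmask (-L) Q - Z) \<le> E"
  shows "\<forall>j\<in>-L. \<mu> / 2 \<le> d$j" and "\<forall>i\<in>L. large_gap \<kappa> / \<Xi> \<le> d$i"
proof -
  have QZ: "\<forall>j\<in>-L. norm (column j Q - column j Z) \<le> E"
    using column_diff_le_entrywise_l1_colmask Z_err by (meson ComplD order_trans)
  have "q \<bullet> (W *v q) \<le> q \<bullet> ((Q ** diagm d ** transpose Q) *v q)" for q
  proof -
    have "0 \<le> \<kappa> / \<Xi> * active_sq_sum B H G q"
      using \<open>\<kappa> > 0\<close> \<open>0 < \<Xi>\<close> by (intro mult_nonneg_nonneg active_sq_sum_nonneg) simp
    then show ?thesis
      using KW[rule_format, of q] by linarith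
  qed
  then have KW': "\<forall>q. q \<bullet> (W *v q) \<le> q \<bullet> ((Q ** diagm d ** transpose Q) *v q)"
    by blast
  show "\<forall>j\<in>-L. \<mu> / 2 \<le> d$j"
  proof
    fix j assume "j \<in> -L"
    then have "column j Z \<in> nullspaceA B H G"
      using Z unfolding null_space_basis_def by (auto intro: span_base)
    then show "\<mu> / 2 \<le> d$j"
      using small_eigenvalue_lower[OF near small(1) Q KW'] QZ \<open>j \<in> -L\<close> by blast
  qed
  show "\<forall>i\<in>L. large_gap \<kappa> / \<Xi> \<le> d$i"
    using large_eigenvalue_lower[OF near _ \<open>0 < \<Xi>\<close> small(3) Q _ KW _ _ QZ \<open>0 \<le> E\<close> small(2)] Z \<open>\<kappa> > 0\<close>
    unfolding null_space_basis_def by simp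
qed

definition schur_constant :: "real \<Rightarrow> real \<Rightarrow> real"
  where "schur_constant \<kappa> cE = (entrywise_l1 Gs + real CARD('n))\<^sup>2
    * (cE * (real CARD('n) / large_gap \<kappa>) * (2 * (real CARD('n))\<^sup>2 + 1) + cE\<^sup>2 * (2 * real CARD('n) / \<mu>))"

lemma schur_complement_error_le:
  fixes Q W Y Z :: "real^'n^'n" and H :: "real^'n^'i" and G :: "real^'n^'e"
  assumes near: "active_rows_norm B (H - Hs) (G - Gs) \<le> radius" "entrywise_l1 (W - Ws) \<le> radius"
    and "\<kappa> > 0" "0 < \<Xi>" "0 \<le> cE"
    and small: "(active_rows_norm B Hs Gs + 1) * (cE * \<Xi>) \<le> c0 * sosc_margin / 2"
      "real CARD('n) * (cE * \<Xi>) \<le> 1 / 2" "\<Xi> * (entrywise_l1 Ws + 1) \<le> large_gap \<kappa>"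
    and Q: "orthogonal_matrix Q"
    and KW: "\<forall>q. q \<bullet> (W *v q) + \<kappa> / \<Xi> * active_sq_sum B H G q \<le> q \<bullet> ((Q ** diagm d ** transpose Q) *v q)"
    and Z: "null_space_basis L Z B H G"
    and Y_err: "entrywise_l1 (colmask L Q - Y) \<le> cE * \<Xi>" and Z_err: "entrywise_l1 (colmask (-L) Q - Z) \<le> cE * \<Xi>"
  shows "invertible (Q ** diagm d ** transpose Q)"
    and "entrywise_l1 (G ** matrix_inv (Q ** diagm d ** transpose Q) ** transpose G
      - G ** Y ** diagm (\<chi> j. if j \<in> L then 1 / d$j else 0) ** transpose Y ** transpose G)
      \<le> schur_constant \<kappa> cE * \<Xi>\<^sup>2"
proof -
  define n where "n = real CARD('n)"
  have "0 \<le> cE * \<Xi>"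
    using \<open>0 \<le> cE\<close> \<open>0 < \<Xi>\<close> by simp
  note d = spectrum_separated[OF near \<open>\<kappa> > 0\<close> \<open>0 < \<Xi>\<close> this small Q KW Z Z_err]
  have "0 < large_gap \<kappa> / \<Xi>" "0 < \<mu> / 2"
    using large_gap_pos[OF \<open>\<kappa> > 0\<close>] \<open>0 < \<Xi>\<close> \<mu>_pos by simp_all
  then have "\<forall>j. d$j \<noteq> 0"
    using d by (metis ComplI linorder_not_le)
  note inv = matrix_inv_spectral[OF Q this]
  then show "invertible (Q ** diagm d ** transpose Q)"
    by blast
  have "n \<ge> 1"
    unfolding n_def by (simp add: Suc_leI)
  then have "cE * \<Xi> \<le> 1"
    using mult_right_mono[OF \<open>n \<ge> 1\<close> \<open>0 \<le> cE * \<Xi>\<close>] small(2) unfolding n_def by linarith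
  have "G ** Z = 0"
    using Z mult_eq_0_if_columns_in_nullspaceA[of L Z B H G]
    by (auto simp: null_space_basis_def intro: span_base)
  have "entrywise_l1 (G ** matrix_inv (Q ** diagm d ** transpose Q) ** transpose G
      - G ** Y ** diagm (\<chi> j. if j \<in> L then 1 / d$j else 0) ** transpose Y ** transpose G)
    \<le> (entrywise_l1 Gs + n) * (cE * \<Xi> * (n / (large_gap \<kappa> / \<Xi>)) * (2 * n ^ 2 + cE * \<Xi>)) * (entrywise_l1 Gs + n)
      + ((entrywise_l1 Gs + n) * (cE * \<Xi>)) * (n / (\<mu> / 2)) * ((entrywise_l1 Gs + n) * (cE * \<Xi>))"
    unfolding inv(2) n_def
    using schur_complement_error_bound[OF Q d(2) _ d(1) _ \<open>G ** Z = 0\<close> Y_err Z_err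
        entrywise_l1_jacobian_le[OF near(1)]] \<open>0 < large_gap \<kappa> / \<Xi>\<close> \<open>0 < \<mu> / 2\<close> by simp
  also have "\<dots> \<le> schur_constant \<kappa> cE * \<Xi>\<^sup>2"
    unfolding schur_constant_def n_def
    by (rule schur_error_le_square[OF \<open>0 < \<Xi>\<close> \<open>cE \<ge> 0\<close> \<open>cE * \<Xi> \<le> 1\<close> large_gap_pos[OF \<open>\<kappa> > 0\<close>] \<mu>_pos])
      simp
  finally show "entrywise_l1 (G ** matrix_inv (Q ** diagm d ** transpose Q) ** transpose G
      - G ** Y ** diagm (\<chi> j. if j \<in> L then 1 / d$j else 0) ** transpose Y ** transpose G)
      \<le> schur_constant \<kappa> cE * \<Xi>\<^sup>2" .
qed

lemma schur_complement_estimate: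
  fixes \<kappa> cE :: real
  assumes "\<kappa> > 0" "cE \<ge> 0"
  obtains \<Xi>0 where "\<Xi>0 > 0"
    and "\<And>W H G Q d L Y Z \<Xi>. active_rows_norm B (H - Hs) (G - Gs) \<le> radius \<Longrightarrow> entrywise_l1 (W - Ws) \<le> radius
      \<Longrightarrow> 0 < \<Xi> \<Longrightarrow> \<Xi> \<le> \<Xi>0 \<Longrightarrow> orthogonal_matrix Q
      \<Longrightarrow> \<forall>q. q \<bullet> (W *v q) + \<kappa> / \<Xi> * active_sq_sum B H G q \<le> q \<bullet> ((Q ** diagm d ** transpose Q) *v q)
      \<Longrightarrow> null_space_basis L Z B H G
      \<Longrightarrow> entrywise_l1 (colmask L Q - Y) \<le> cE * \<Xi> \<Longrightarrow> entrywise_l1 (colmask (-L) Q - Z) \<le> cE * \<Xi>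
      \<Longrightarrow> invertible (Q ** diagm d ** transpose Q)
        \<and> entrywise_l1 (G ** matrix_inv (Q ** diagm d ** transpose Q) ** transpose G
            - G ** Y ** diagm (\<chi> j. if j \<in> L then 1 / d$j else 0) ** transpose Y ** transpose G)
          \<le> schur_constant \<kappa> cE * \<Xi>\<^sup>2"
proof -
  define A n where "A = active_rows_norm B Hs Gs + 1" and "n = real CARD('n)"
  have "A > 0" "n \<ge> 1"
    unfolding A_def n_def using active_rows_norm_nonneg[of B Hs Gs] by (simp_all add: Suc_leI)
  then have pos: "0 < 2 * (A * cE + 1)" "0 < 2 * (n * cE + 1)" "0 < entrywise_l1 Ws + 1"
    using \<open>cE \<ge> 0\<close> entrywise_l1_nonneg[of Ws] by (simp_all add: add_nonneg_pos)
  define \<Xi>0 where "\<Xi>0 = min (min (c0 * sosc_margin / (2 * (A * cE + 1))) (large_gap \<kappa> / (entrywise_l1 Ws + 1)))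
    (1 / (2 * (n * cE + 1)))"
  have "\<Xi>0 > 0"
    unfolding \<Xi>0_def using pos c0_pos sosc_margin_bounds(1) large_gap_pos[OF \<open>\<kappa> > 0\<close>] by simp
  have small: "A * (cE * \<Xi>) \<le> c0 * sosc_margin / 2" "n * (cE * \<Xi>) \<le> 1 / 2"
    "\<Xi> * (entrywise_l1 Ws + 1) \<le> large_gap \<kappa>" if "0 < \<Xi>" "\<Xi> \<le> \<Xi>0" for \<Xi>
    using that pos \<open>cE \<ge> 0\<close> \<open>A > 0\<close> unfolding \<Xi>0_def by (simp_all add: field_simps)
  show thesis
  proof (rule that[OF \<open>\<Xi>0 > 0\<close>], goal_cases)
    case (1 W H G Q d L Y Z \<Xi>)
    then show ?case
      using schur_complement_error_le[OF 1(1,2) \<open>\<kappa> > 0\<close> 1(3) \<open>cE \<ge> 0\<close> small[OF 1(3,4), unfolded A_def n_def]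
          1(5-9)] by blast
  qed
qed

end

section \<open>Interior-point iterates\<close>

lemma inner_condensed:
  "q \<bullet> (condensed W G H s v \<gamma> *v q)
   = q \<bullet> (W *v q) + (\<Sum>i\<in>UNIV. v$i / s$i * (H$i \<bullet> q)\<^sup>2) + \<gamma> * (\<Sum>j\<in>UNIV. (G$j \<bullet> q)\<^sup>2)"
proof -
  have transp: "x \<bullet> (transpose A *v y) = (A *v x) \<bullet> y" for x y and A :: "real^'n^'m"
    using dot_lmul_matrix[of x "transpose A" y] by simp
  have row: "(A *v x) $ i = A$i \<bullet> x" for A :: "real^'n^'m" and x i
    by (simp add: matrix_vector_mult_def inner_vec_def mult.commute)
  have "q \<bullet> ((transpose H ** diagm (\<chi> i. v$i / s$i) ** H) *v q)
      = (H *v q) \<bullet> (diagm (\<chi> i. v$i / s$i) *v (H *v q))"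
    by (simp only: matrix_vector_mul_assoc[symmetric] transp)
  also have "\<dots> = (\<Sum>i\<in>UNIV. v$i / s$i * (H$i \<bullet> q)\<^sup>2)"
    by (simp add: inner_vec_def diagm_mult_vector row power2_eq_square mult_ac)
  finally have "q \<bullet> ((transpose H ** diagm (\<chi> i. v$i / s$i) ** H) *v q)
      = (\<Sum>i\<in>UNIV. v$i / s$i * (H$i \<bullet> q)\<^sup>2)" .
  moreover have "q \<bullet> ((transpose G ** G) *v q) = (G *v q) \<bullet> (G *v q)"
    by (simp only: matrix_vector_mul_assoc[symmetric] transp)
  then have "q \<bullet> ((transpose G ** G) *v q) = (\<Sum>j\<in>UNIV. (G$j \<bullet> q)\<^sup>2)"
    by (simp add: inner_vec_def row power2_eq_square)
  ultimately show ?thesis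
    unfolding condensed_def
    by (simp add: matrix_vector_mult_add_rdistrib inner_add_right flip: scaleR_matrix_vector_assoc)
qed

lemma condensed_quadratic_form_lower:
  assumes "\<forall>i. 0 < s$i \<and> 0 < v$i" and "\<forall>i\<in>B. \<kappa> \<le> v$i / s$i" and "\<kappa> \<le> \<gamma>"
  shows "q \<bullet> (W *v q) + \<kappa> * active_sq_sum B H G q \<le> q \<bullet> (condensed W G H s v \<gamma> *v q)"
proof -
  have "\<kappa> * (\<Sum>i\<in>B. (H$i \<bullet> q)\<^sup>2) \<le> (\<Sum>i\<in>B. v$i / s$i * (H$i \<bullet> q)\<^sup>2)"
    using assms(2) unfolding sum_distrib_left by (intro sum_mono mult_right_mono) simp_all
  also have "\<dots> \<le> (\<Sum>i\<in>UNIV. v$i / s$i * (H$i \<bullet> q)\<^sup>2)"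
    using assms(1) by (intro sum_mono2) (simp_all add: less_imp_le)
  finally have "\<kappa> * (\<Sum>i\<in>B. (H$i \<bullet> q)\<^sup>2) \<le> (\<Sum>i\<in>UNIV. v$i / s$i * (H$i \<bullet> q)\<^sup>2)" .
  moreover have "\<kappa> * (\<Sum>j\<in>UNIV. (G$j \<bullet> q)\<^sup>2) \<le> \<gamma> * (\<Sum>j\<in>UNIV. (G$j \<bullet> q)\<^sup>2)"
    using assms(3) by (simp add: mult_right_mono sum_nonneg)
  ultimately show ?thesis
    unfolding inner_condensed active_sq_sum_def by (simp add: distrib_left)
qed

lemma duality_pos: "\<forall>i. 0 < s$i \<and> 0 < v$i \<Longrightarrow> 0 < duality s v"
  unfolding duality_def inner_vec_def inner_real_def by (intro divide_pos_pos sum_pos) auto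

lemma multiplier_ratio_lower:
  fixes s v :: "real^'i::finite"
  assumes "\<forall>i. 0 < s$i \<and> 0 < v$i" and "0 < a" "a \<le> v$i"
  shows "a\<^sup>2 / (real CARD('i) * duality s v) \<le> v$i / s$i"
proof -
  have "s$i * v$i \<le> s \<bullet> v"
    unfolding inner_vec_def inner_real_def using assms(1) by (intro member_le_sum) (auto intro: less_imp_le)
  then have "s$i * v$i \<le> real CARD('i) * duality s v"
    unfolding duality_def by simp
  then have "a\<^sup>2 / (real CARD('i) * duality s v) \<le> (v$i)\<^sup>2 / (s$i * v$i)"
    using assms by (intro frac_le power_mono) auto
  also have "\<dots> = v$i / s$i"
    using assms(1) by (simp add: power2_eq_square)
  finally show ?thesis .
qed

lemma condensed_quadratic_form_duality_lower:
  fixes s v :: "real^'i::finite"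
  assumes sv: "\<forall>i. 0 < s$i \<and> 0 < v$i" and "0 < vlow" "\<forall>i\<in>B. vlow \<le> v$i"
    and \<gamma>: "c1 / duality s v \<le> \<gamma>"
  shows "q \<bullet> (W *v q) + min c1 (vlow\<^sup>2 / real CARD('i)) / duality s v * active_sq_sum B H G q
    \<le> q \<bullet> (condensed W G H s v \<gamma> *v q)"
proof (rule condensed_quadratic_form_lower[OF sv])
  have "0 < duality s v"
    using duality_pos[OF sv] .
  show "\<forall>i\<in>B. min c1 (vlow\<^sup>2 / real CARD('i)) / duality s v \<le> v$i / s$i"
  proof
    fix i assume "i \<in> B"
    have "min c1 (vlow\<^sup>2 / real CARD('i)) / duality s v \<le> vlow\<^sup>2 / real CARD('i) / duality s v"
      using \<open>0 < duality s v\<close> by (intro divide_right_mono) auto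
    also have "\<dots> \<le> v$i / s$i"
      using multiplier_ratio_lower[OF sv \<open>0 < vlow\<close>] assms(3) \<open>i \<in> B\<close> by simp
    finally show "min c1 (vlow\<^sup>2 / real CARD('i)) / duality s v \<le> v$i / s$i" .
  qed
  have "min c1 (vlow\<^sup>2 / real CARD('i)) / duality s v \<le> c1 / duality s v"
    using \<open>0 < duality s v\<close> by (intro divide_right_mono) auto
  then show "min c1 (vlow\<^sup>2 / real CARD('i)) / duality s v \<le> \<gamma>"
    using \<gamma> by linarith
qed

lemma entrywise_l1_le_of_norm_le_sigma:
  fixes M :: "real^'a^'b"
  assumes M: "norm M \<le> cY / min (1 / \<Xi>) \<gamma>" and \<gamma>: "c1 / \<Xi> \<le> \<gamma>"
    and "0 < \<Xi>" "0 < c1" "0 \<le> cY"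
  shows "entrywise_l1 M \<le> real CARD('a) * real CARD('b) * cY / min 1 c1 * \<Xi>"
proof -
  have "min 1 c1 / \<Xi> \<le> 1 / \<Xi>" "min 1 c1 / \<Xi> \<le> c1 / \<Xi>"
    using \<open>0 < \<Xi>\<close> by (simp_all add: divide_right_mono)
  then have \<sigma>: "min 1 c1 / \<Xi> \<le> min (1 / \<Xi>) \<gamma>"
    using \<gamma> by simp
  moreover have "0 < min 1 c1 / \<Xi>"
    using \<open>0 < \<Xi>\<close> \<open>0 < c1\<close> by simp
  ultimately have "0 < min (1 / \<Xi>) \<gamma> * (min 1 c1 / \<Xi>)"
    by (metis less_le_trans mult_pos_pos)
  then have "cY / min (1 / \<Xi>) \<gamma> \<le> cY / (min 1 c1 / \<Xi>)"
    by (rule divide_left_mono[OF \<sigma> \<open>0 \<le> cY\<close>])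
  then have "real CARD('a) * real CARD('b) * norm M \<le> real CARD('a) * real CARD('b) * (cY / (min 1 c1 / \<Xi>))"
    using M by (intro mult_left_mono) auto
  then show ?thesis
    using entrywise_l1_le_norm[of M] by simp
qed

context kkt_reference
begin

lemma interior_point_schur_complement_estimate:
  fixes vlow c1 cY :: real
  assumes "vlow > 0" "c1 > 0" "cY \<ge> 0"
  obtains \<Xi>0 M where "\<Xi>0 > 0"
    and "\<And>W H G s v \<gamma> Q d L Y Z. active_rows_norm B (H - Hs) (G - Gs) \<le> radius \<Longrightarrow> entrywise_l1 (W - Ws) \<le> radius
      \<Longrightarrow> \<forall>i. 0 < s$i \<and> 0 < v$i \<Longrightarrow> \<forall>i\<in>B. vlow \<le> v$i \<Longrightarrow> duality s v \<le> \<Xi>0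
      \<Longrightarrow> c1 / duality s v \<le> \<gamma> \<Longrightarrow> orthogonal_matrix Q \<Longrightarrow> condensed W G H s v \<gamma> = Q ** diagm d ** transpose Q
      \<Longrightarrow> null_space_basis L Z B H G
      \<Longrightarrow> norm (colmask L Q - Y) \<le> cY / min (1 / duality s v) \<gamma>
      \<Longrightarrow> norm (colmask (-L) Q - Z) \<le> cY / min (1 / duality s v) \<gamma>
      \<Longrightarrow> invertible (condensed W G H s v \<gamma>)
        \<and> norm (G ** matrix_inv (condensed W G H s v \<gamma>) ** transpose G
            - G ** Y ** diagm (\<chi> j. if j \<in> L then 1 / d$j else 0) ** transpose Y ** transpose G)
          \<le> M * (duality s v)\<^sup>2"
proof -
  define \<kappa> where "\<kappa> = min c1 (vlow\<^sup>2 / real CARD('i))"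
  define cE where "cE = real CARD('n) * real CARD('n) * cY / min 1 c1"
  have "\<kappa> > 0" "cE \<ge> 0"
    unfolding \<kappa>_def cE_def using assms by auto
  then show thesis
  proof (rule schur_complement_estimate, goal_cases)
    case (1 \<Xi>0)
    show thesis
    proof (rule that[where M="schur_constant \<kappa> cE", OF 1(1)])
      fix W H G s v \<gamma> Q d L Y Z
      assume near: "active_rows_norm B (H - Hs) (G - Gs) \<le> radius" "entrywise_l1 (W - Ws) \<le> radius"
        and sv: "\<forall>i. 0 < s$i \<and> 0 < v$i" and vlow: "\<forall>i\<in>B. vlow \<le> v$i"
        and \<Xi>: "duality s v \<le> \<Xi>0" and \<gamma>: "c1 / duality s v \<le> \<gamma>"
        and Q: "orthogonal_matrix Q" and K: "condensed W G H s v \<gamma> = Q ** diagm d ** transpose Q"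
        and Z: "null_space_basis L Z B H G"
        and UY: "norm (colmask L Q - Y) \<le> cY / min (1 / duality s v) \<gamma>"
        and UZ: "norm (colmask (-L) Q - Z) \<le> cY / min (1 / duality s v) \<gamma>"
      have KW: "\<forall>q. q \<bullet> (W *v q) + \<kappa> / duality s v * active_sq_sum B H G q
          \<le> q \<bullet> ((Q ** diagm d ** transpose Q) *v q)"
        using condensed_quadratic_form_duality_lower[OF sv \<open>vlow > 0\<close> vlow \<gamma>] K unfolding \<kappa>_def by metis
      have "entrywise_l1 (colmask L Q - Y) \<le> cE * duality s v"
        "entrywise_l1 (colmask (-L) Q - Z) \<le> cE * duality s v"
        using entrywise_l1_le_of_norm_le_sigma[OF _ \<gamma> duality_pos[OF sv] \<open>c1 > 0\<close> \<open>cY \<ge> 0\<close>] UY UZ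
        unfolding cE_def by simp_all
      then show "invertible (condensed W G H s v \<gamma>)
          \<and> norm (G ** matrix_inv (condensed W G H s v \<gamma>) ** transpose G
              - G ** Y ** diagm (\<chi> j. if j \<in> L then 1 / d$j else 0) ** transpose Y ** transpose G)
            \<le> schur_constant \<kappa> cE * (duality s v)\<^sup>2"
        using 1(2)[OF near duality_pos[OF sv] \<Xi> Q KW Z] norm_le_entrywise_l1 order_trans
        unfolding K by blast
    qed
  qed
qed

end

lemma kkt_reference_exists:
  fixes Hs :: "real^'n::finite^'i::finite" and Gs :: "real^'n^'e::finite"
  assumes "\<forall>a b. (\<Sum>i\<in>B. a i *\<^sub>R Hs$i) + (\<Sum>j\<in>UNIV. b j *\<^sub>R Gs$j) = 0 \<longrightarrow> (\<forall>i\<in>B. a i = 0) \<and> (\<forall>j. b j = 0)"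
    and "\<forall>d. d \<noteq> 0 \<and> d \<in> nullspaceA B Hs Gs \<longrightarrow> d \<bullet> (Ws *v d) > 0"
  obtains c0 \<mu> where "kkt_reference B Hs Gs Ws c0 \<mu>"
proof -
  obtain c0 where "c0 > 0" "\<And>a b. c0 * coeff_l1 B a b \<le> norm (active_comb B Hs Gs a b)"
    using licq_coeff_bound[OF assms(1)] by blast
  moreover obtain \<mu> where "\<mu> > 0" "\<And>d. d \<in> nullspaceA B Hs Gs \<Longrightarrow> \<mu> * (norm d)\<^sup>2 \<le> d \<bullet> (Ws *v d)"
    using quadratic_form_coercive_on_subspace[OF assms(2) subspace_nullspaceA] by blast
  ultimately show thesis
    by (intro that[of c0 \<mu>] kkt_reference.intro) auto
qed

lemma kkt_complementarity:
  assumes "gradpL fg Jg Jh g h xs ss ys zs vs = 0"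
    and "\<forall>i. ss$i \<ge> 0 \<and> vs$i \<ge> 0 \<and> ss$i * vs$i = 0" and "\<forall>i. ss$i + vs$i > 0"
  shows "ss \<bullet> vs = 0" and "\<forall>i\<in>{i. h xs $ i = 0}. 0 < vs$i"
proof -
  show "ss \<bullet> vs = 0"
    using assms(2) by (auto simp: inner_vec_def intro!: sum.neutral)
  have "h xs + ss = 0"
    using assms(1) unfolding gradpL_def by (simp add: zero_prod_def)
  then show "\<forall>i\<in>{i. h xs $ i = 0}. 0 < vs$i"
    using assms(2,3) by (auto simp: vec_eq_iff) (metis add.left_neutral add.right_neutral)
qed

lemma finite_positive_lower_bound:
  assumes "finite A" "\<forall>i\<in>A. 0 < f i"
  obtains a :: real where "0 < a" "\<forall>i\<in>A. a \<le> f i"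
  using assms by (intro that[of "Min (insert 1 (f ` A))"]) (auto simp: Min_gr_iff)

lemma isCont_eventually_less: "isCont f a \<Longrightarrow> f a < c \<Longrightarrow> \<forall>\<^sub>F x in nhds a. f x < (c::real)"
  by (metis isCont_def order_tendstoD(2) tendsto_at_iff_tendsto_nhds)

lemma isCont_eventually_greater: "isCont f a \<Longrightarrow> c < f a \<Longrightarrow> \<forall>\<^sub>F x in nhds a. (c::real) < f x"
  by (metis isCont_def order_tendstoD(1) tendsto_at_iff_tendsto_nhds)

lemma near_kkt_point:
  fixes Jh :: "real^'n \<Rightarrow> real^'n^'i::finite" and Jg :: "real^'n \<Rightarrow> real^'n^'e::finite"
    and W :: "(real^'n) \<times> (real^'i) \<times> (real^'e) \<times> (real^'i) \<Rightarrow> real^'n^'n"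
  assumes Jh: "\<And>k. isCont (\<lambda>x. Jh x $ k) xs" and Jg: "\<And>k. isCont (\<lambda>x. Jg x $ k) xs"
    and W: "isCont W (xs, ss, ys, zs)"
    and complementary: "ss \<bullet> vs = 0" and active: "\<forall>i\<in>B. 0 < vs$i" and "D > 0" "\<Xi>0 > 0"
  obtains \<delta> where "\<delta> > 0"
    and "\<And>x s y z v. norm (((x, s, y, z), v) - ((xs, ss, ys, zs), vs)) < \<delta> \<Longrightarrow>
      active_rows_norm B (Jh x - Jh xs) (Jg x - Jg xs) < D
      \<and> entrywise_l1 (W (x, s, y, z) - W (xs, ss, ys, zs)) < D
      \<and> (\<forall>i\<in>B. vs$i / 2 < v$i) \<and> duality s v < \<Xi>0"
proof -
  define p0 where "p0 = ((xs, ss, ys, zs), vs)"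
  have "isCont (\<lambda>p. Jh (fst (fst p)) $ k) p0" "isCont (\<lambda>p. Jg (fst (fst p)) $ l) p0"
    "isCont (\<lambda>p. W (fst p)) p0" for k l
    using isCont_o2[where f="\<lambda>p. fst (fst p)" and a=p0 and g="\<lambda>x. Jh x $ k"]
      isCont_o2[where f="\<lambda>p. fst (fst p)" and a=p0 and g="\<lambda>x. Jg x $ l"]
      isCont_o2[where f=fst and a=p0 and g=W] Jh Jg W
    unfolding p0_def by simp_all
  then have "isCont (\<lambda>p. active_rows_norm B (Jh (fst (fst p)) - Jh xs) (Jg (fst (fst p)) - Jg xs)) p0"
    "isCont (\<lambda>p. entrywise_l1 (W (fst p) - W (xs, ss, ys, zs))) p0"
    "isCont (\<lambda>p. duality (fst (snd (fst p))) (snd p)) p0" "isCont (\<lambda>p. snd p $ i) p0" for i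
    unfolding active_rows_norm_def entrywise_l1_def duality_def inner_vec_def
    by (simp_all add: continuous_intros)
  then have "\<forall>\<^sub>F p in nhds p0. active_rows_norm B (Jh (fst (fst p)) - Jh xs) (Jg (fst (fst p)) - Jg xs) < D
      \<and> entrywise_l1 (W (fst p) - W (xs, ss, ys, zs)) < D
      \<and> (\<forall>i\<in>B. vs$i / 2 < snd p $ i) \<and> duality (fst (snd (fst p))) (snd p) < \<Xi>0"
    using complementary active \<open>D > 0\<close> \<open>\<Xi>0 > 0\<close>
    by (intro eventually_conj eventually_ball_finite ballI isCont_eventually_less isCont_eventually_greater)
      (auto simp: p0_def active_rows_norm_def entrywise_l1_def duality_def)
  then obtain \<delta> where "\<delta> > 0" and "\<forall>p. dist p p0 < \<delta> \<longrightarrow>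
      active_rows_norm B (Jh (fst (fst p)) - Jh xs) (Jg (fst (fst p)) - Jg xs) < D
      \<and> entrywise_l1 (W (fst p) - W (xs, ss, ys, zs)) < D
      \<and> (\<forall>i\<in>B. vs$i / 2 < snd p $ i) \<and> duality (fst (snd (fst p))) (snd p) < \<Xi>0"
    unfolding eventually_nhds_metric by blast
  then show thesis
    using that[of \<delta>] unfolding p0_def dist_norm by auto
qed

theorem proposition4:
  fixes f :: "real^'n \<Rightarrow> real" and fg :: "real^'n \<Rightarrow> real^'n" and fH :: "real^'n \<Rightarrow> real^'n^'n"
    and g :: "real^'n \<Rightarrow> real^'e" and Jg :: "real^'n \<Rightarrow> real^'n^'e"
    and gH :: "'e \<Rightarrow> real^'n \<Rightarrow> real^'n^'n"
    and h :: "real^'n \<Rightarrow> real^'i" and Jh :: "real^'n \<Rightarrow> real^'n^'i"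
    and hH :: "'i \<Rightarrow> real^'n \<Rightarrow> real^'n^'n"
    and xs :: "real^'n" and ss zs vs :: "real^'i" and ys :: "real^'e"
    and C \<alpha> c1 c2 cY :: real
  assumes f_deriv: "\<And>x. (f has_derivative (\<lambda>d. fg x \<bullet> d)) (at x)"
    and fg_deriv: "\<And>x. (fg has_derivative (\<lambda>d. fH x *v d)) (at x)"
    and g_deriv: "\<And>x. (g has_derivative (\<lambda>d. Jg x *v d)) (at x)"
    and Jg_deriv: "\<And>x k. ((\<lambda>x. Jg x $ k) has_derivative (\<lambda>d. gH k x *v d)) (at x)"
    and h_deriv: "\<And>x. (h has_derivative (\<lambda>d. Jh x *v d)) (at x)"
    and Jh_deriv: "\<And>x k. ((\<lambda>x. Jh x $ k) has_derivative (\<lambda>d. hH k x *v d)) (at x)"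
    and W_lip: "\<exists>r>0. \<exists>Lw. Lw-lipschitz_on (ball (xs, ss, ys, zs) r)
                   (\<lambda>(x, s, y, z). hessL fH gH hH x y z)"
    and KKT: "gradpL fg Jg Jh g h xs ss ys zs vs = 0"
    and KKT_sign: "\<forall>i. ss$i \<ge> 0 \<and> vs$i \<ge> 0 \<and> ss$i * vs$i = 0"
    and strict_compl: "\<forall>i. ss$i + vs$i > 0"
    and LICQ: "\<forall>a b. (\<Sum>i\<in>{i. h xs $ i = 0}. a i *\<^sub>R (Jh xs $ i)) + (\<Sum>j\<in>UNIV. b j *\<^sub>R (Jg xs $ j)) = 0
                 \<longrightarrow> (\<forall>i\<in>{i. h xs $ i = 0}. a i = 0) \<and> (\<forall>j. b j = 0)"
    and SOSC: "\<forall>d. d \<noteq> 0 \<and> d \<in> nullspaceA {i. h xs $ i = 0} (Jh xs) (Jg xs)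
                 \<longrightarrow> d \<bullet> (hessL fH gH hH xs ys zs *v d) > 0"
    and C_pos: "C > 0" and \<alpha>_bounds: "0 < \<alpha>" "\<alpha> < 1"
    and c_bounds: "0 < c1" "c1 \<le> c2" and cY_pos: "cY > 0"
  shows "\<exists>\<delta>>0. \<exists>M. \<forall>(x::real^'n) (s::real^'i) (y::real^'e) (z::real^'i) (v::real^'i) (\<gamma>::real)
            (Q::real^'n^'n) (d::real^'n) (L::'n set) (Y::real^'n^'n) (Z::real^'n^'n).
     let B = {i. h xs $ i = 0};
         \<Xi> = duality s v;
         W = hessL fH gH hH x y z;
         G = Jg x; H = Jh x;
         K = condensed W G H s v \<gamma>;
         \<sigma> = min (1 / \<Xi>) \<gamma>
     in
     ( norm (((x, s, y, z), v) - ((xs, ss, ys, zs), vs)) < \<delta>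
     \<comment> \<open>(a) centrality conditions\<close>
     \<and> norm (gradpL fg Jg Jh g h x s y z v) \<le> C * \<Xi>
     \<and> (\<forall>i. s$i > 0 \<and> v$i > 0) \<and> (\<forall>i. s$i * v$i \<ge> \<alpha> * \<Xi>)
     \<comment> \<open>(b) gamma = Theta(1/Xi)\<close>
     \<and> c1 / \<Xi> \<le> \<gamma> \<and> \<gamma> \<le> c2 / \<Xi>
     \<comment> \<open>spectral decomposition K = U_L Sigma_L U_L^T + U_S Sigma_S U_S^T,
         with U_L = columns of Q in L, U_S = columns of Q outside L\<close>
     \<and> orthogonal_matrix Q \<and> K = Q ** diagm d ** transpose Q
     \<and> card L = CARD('e) + card B
     \<and> (\<forall>i\<in>L. \<forall>j\<in>-L. \<bar>d$j\<bar> \<le> \<bar>d$i\<bar>)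
     \<comment> \<open>Y: orthonormal basis of the row space of A (columns indexed by L)\<close>
     \<and> transpose Y ** Y = diagm (indvec L) \<and> colmask L Y = Y
     \<and> span {column j Y | j. j \<in> L} = rowspaceA B H G
     \<comment> \<open>Z: orthonormal basis of the null space of A (columns indexed by -L)\<close>
     \<and> transpose Z ** Z = diagm (indvec (-L)) \<and> colmask (-L) Z = Z
     \<and> span {column j Z | j. j \<in> -L} = nullspaceA B H G
     \<comment> \<open>U_L - Y = O(1/sigma), U_S - Z = O(1/sigma)\<close>
     \<and> norm (colmask L Q - Y) \<le> cY / \<sigma>
     \<and> norm (colmask (-L) Q - Z) \<le> cY / \<sigma>
     \<longrightarrow> invertible K
         \<and> norm (G ** matrix_inv K ** transpose G
                 - G ** Y ** diagm (\<chi> j. if j \<in> L then 1 / d$j else 0) ** transpose Y ** transpose G)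
           \<le> M * \<Xi>\<^sup>2)"
proof -
  define B Hs Gs Ws where "B = {i. h xs $ i = 0}" and "Hs = Jh xs" and "Gs = Jg xs"
    and "Ws = hessL fH gH hH xs ys zs"
  obtain c0 \<mu> where "kkt_reference B Hs Gs Ws c0 \<mu>"
    using kkt_reference_exists[OF LICQ[folded B_def Hs_def Gs_def] SOSC[folded B_def Hs_def Gs_def Ws_def]] .
  then interpret kkt_reference B Hs Gs Ws c0 \<mu> .
  note complementarity = kkt_complementarity[OF KKT KKT_sign strict_compl, folded B_def]
  obtain vlow where "vlow > 0" and vlow: "\<forall>i\<in>B. vlow \<le> vs$i / 2"
    using finite_positive_lower_bound[of B "\<lambda>i. vs$i / 2"] complementarity(2) by auto
  have "isCont (\<lambda>(x, s, y, z). hessL fH gH hH x y z) (xs, ss, ys, zs)"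
    using W_lip by (metis centre_in_ball continuous_on_interior interior_ball lipschitz_on_continuous_on)
  note near_kkt = near_kkt_point[where W="\<lambda>(x, s, y, z). hessL fH gH hH x y z" and B=B,
      OF has_derivative_continuous[OF Jh_deriv] has_derivative_continuous[OF Jg_deriv] this
      complementarity radius_pos]
  show ?thesis
  proof (rule interior_point_schur_complement_estimate[OF \<open>vlow > 0\<close> c_bounds(1) less_imp_le[OF cY_pos]],
      goal_cases)
    case (1 \<Xi>0 M)
    note estimate = 1(2)
    show ?case
    proof (rule near_kkt[OF 1(1)], unfold Let_def B_def[symmetric], goal_cases)
      case (1 \<delta>)
      note near = 1(2)
      show ?case
      proof (rule exI[of _ \<delta>], rule conjI[OF 1(1)], rule exI[of _ M], intro allI impI, elim conjE, goal_cases)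
        case (1 x s y z v \<gamma> Q d L Y Z)
        \<comment> \<open>Only proximity, \<open>s, v > 0\<close>, \<open>\<gamma> \<ge> c1/\<Xi>\<close>, the spectral decomposition, the basis \<open>Z\<close> and the
          two \<open>O(1/\<sigma>)\<close> bounds are used.\<close>
        have "active_rows_norm B (Jh x - Hs) (Jg x - Gs) \<le> radius"
          "entrywise_l1 (hessL fH gH hH x y z - Ws) \<le> radius"
          "\<forall>i\<in>B. vlow \<le> v$i" "duality s v \<le> \<Xi>0"
          using near[OF 1(1)] vlow unfolding Hs_def Gs_def Ws_def by (fastforce intro: less_imp_le order_trans)+
        then show ?case
          using estimate[OF _ _ 1(3) _ _ 1(5,7,8) _ 1(17,18)] 1(14-16) unfolding null_space_basis_def by simp
      qed
    qed
  qed
qed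

end
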